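(* Let ${\bf X}$ be a finite-dimensional real Hilbert space, ${\cal M}$ a ${\cal C}^2$-smooth manifold of codimension $m$ around ${\bar x}$ with ${\cal M}\cap{\cal O}=\{x\in{\cal O}\mid\Phi(x)=0\}$ ($\Phi:{\cal O}\to\mathbb{R}^m$ ${\cal C}^2$, $\nabla\Phi({\bar x})$ surjective), and $f:{\bf X}\to\overline{\mathbb{R}}$ ${\cal C}^2$-partly smooth at ${\bar x}$ relative to ${\cal M}$ with ${\cal C}^2$-smooth representative $\widehat f$ around ${\bar x}$; let ${\bar v}\in{\rm ri}\,\partial f({\bar x})$. Assume $f$ is prox-regular and subdifferentially continuous at ${\bar x}$ for ${\bar v}$, and $f$ is prox-bounded. Let $L(u,y):=\widehat f(u)+\langle y,\Phi(u)\rangle$. Then for every $r>0$ sufficiently small, the proximal mapping ${\rm prox}_{rf}$ is ${\cal M}$-valued and ${\cal C}^1$-smooth around ${\bar x}+r{\bar v}$, with $$\nabla({\rm prox}_{rf})(z)=\big(P_{T_{\cal M}(x)}\circ(I_{\bf X}+r\nabla^2_{xx}L(x,\mu))|_{T_{\cal M}(x)}\big)^{-1}\circ P_{T_{\cal M}(x)},$$ where $x={\rm prox}_{rf}(z)$ and $\mu\in\mathbb{R}^m$ is the unique vector with $\nabla_xL(x,\mu)=(z-x)/r$.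
   Context: ${\rm prox}_{rf}(x)=\arg\min_{w}\{f(w)+\frac1{2r}\|w-x\|^2\}$. $f$ is prox-bounded if $f+\alpha\|\cdot\|^2$ is bounded below for some $\alpha\in\mathbb{R}$. $I_{\bf X}$ identity; $P_T$ orthogonal projection; $A|_T$ restriction; $T_{\cal M}(x)=\ker\nabla\Phi(x)$, $N_{\cal M}(x)={\rm rge}\,\nabla\Phi(x)^*$. $\partial f$ limiting subdifferential; ${\rm ri}$, ${\rm aff}$ relative interior, affine hull; ${\rm par}\,C$ subspace parallel to ${\rm aff}\,C$. ${\cal C}^2$-partial smoothness at ${\bar x}$ relative to ${\cal M}$: (a) there is $\widehat f:{\bf X}\to\mathbb{R}$, ${\cal C}^2$ around ${\bar x}$, equal to $f$ on ${\cal M}$ near ${\bar x}$; (b) at each $x\in{\cal M}$ near ${\bar x}$, $f$ is subdifferentially regular with $\partial f(x)\ne\emptyset$; (c) $N_{\cal M}({\bar x})={\rm par}\,\partial f({\bar x})$; (d) $\lim_{x\to{\bar x},x\in{\cal M}}\partial f(x)$ exists (Painlevé–Kuratowski) and equals $\partial f({\bar x})$. Prox-regularity at ${\bar x}$ for ${\bar v}$: $f({\bar x})$ finite, $f$ locally lsc near ${\bar x}$, ${\bar v}\in\partial f({\bar x})$, and there exist $\epsilon>0,\rho\ge0$ with $f(u)\ge f(x')+\langle v',u-x'\rangle-\frac\rho2\|u-x'\|^2$ for all $u\in\mathbb{B}_\epsilon({\bar x})$ whenever $(x',v')\in\mathbb{B}_\epsilon({\bar x},{\bar v})\cap{\rm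 gph}\,\partial f$, $f(x')\le f({\bar x})+\epsilon$. Subdifferential continuity: $(x^k,v^k)\to({\bar x},{\bar v})$, $v^k\in\partial f(x^k)$ imply $f(x^k)\to f({\bar x})$. *)

theory Defs
  imports "HOL-Analysis.Analysis"
begin

definition C1_on :: "'a::euclidean_space set \<Rightarrow> ('a \<Rightarrow> 'b::euclidean_space) \<Rightarrow> bool" where
  "C1_on U g \<longleftrightarrow> open U \<and> (\<exists>D :: 'a \<Rightarrow> ('a \<Rightarrow>\<^sub>L 'b).
      (\<forall>x\<in>U. (g has_derivative blinfun_apply (D x)) (at x)) \<and> continuous_on U D)"

definition C2_on :: "'a::euclidean_space set \<Rightarrow> ('a \<Rightarrow> 'b::euclidean_space) \<Rightarrow> bool" where
  "C2_on U g \<longleftrightarrow> open U \<and> (\<exists>(D :: 'a \<Rightarrow> ('a \<Rightarrow>\<^sub>L 'b)) (D2 :: 'a \<Rightarrow> ('a \<Rightarrow>\<^sub>L ('a \<Rightarrow>\<^sub>L 'b))).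
      (\<forall>x\<in>U. (g has_derivative blinfun_apply (D x)) (at x)) \<and>
      (\<forall>x\<in>U. (D has_derivative blinfun_apply (D2 x)) (at x)) \<and> continuous_on U D2)"

definition grad :: "('a::euclidean_space \<Rightarrow> real) \<Rightarrow> 'a \<Rightarrow> 'a" where
  "grad g x = (\<Sum>b\<in>Basis. frechet_derivative g (at x) b *\<^sub>R b)"

definition hess :: "('a::euclidean_space \<Rightarrow> real) \<Rightarrow> 'a \<Rightarrow> 'a \<Rightarrow> 'a" where
  "hess g x = frechet_derivative (grad g) (at x)"

definition lagr :: "('a \<Rightarrow> real) \<Rightarrow> ('a \<Rightarrow> 'b::real_inner) \<Rightarrow> 'a \<Rightarrow> 'b \<Rightarrow> real" where
  "lagr fhat \<Phi> u y = fhat u + y \<bullet> \<Phi> u"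

definition tangent_sp :: "('a::euclidean_space \<Rightarrow> 'b::euclidean_space) \<Rightarrow> 'a \<Rightarrow> 'a set" where
  "tangent_sp \<Phi> x = {h. frechet_derivative \<Phi> (at x) h = 0}"

definition normal_sp :: "('a::euclidean_space \<Rightarrow> 'b::euclidean_space) \<Rightarrow> 'a \<Rightarrow> 'a set" where
  "normal_sp \<Phi> x = range (adjoint (frechet_derivative \<Phi> (at x)))"

definition orth_proj :: "'a::euclidean_space set \<Rightarrow> 'a \<Rightarrow> 'a" where
  "orth_proj T x = closest_point T x"

definition par :: "'a::euclidean_space set \<Rightarrow> 'a set" where
  "par C = {a - b | a b. a \<in> affine hull C \<and> b \<in> affine hull C}"

definition finite_at :: "('a \<Rightarrow> ereal) \<Rightarrow> 'a \<Rightarrow> bool" where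
  "finite_at f x \<longleftrightarrow> f x \<noteq> \<infinity> \<and> f x \<noteq> -\<infinity>"

text \<open>Regular (Frechet) subdifferential, literal unfolding of
  liminf_{u -> x, u ~= x} (f u - f x - <v,u-x>)/|u-x| >= 0.\<close>

definition reg_subdiff :: "('a::euclidean_space \<Rightarrow> ereal) \<Rightarrow> 'a \<Rightarrow> 'a set" where
  "reg_subdiff f x = {v. finite_at f x \<and> (\<forall>\<epsilon>>0. \<exists>\<delta>>0. \<forall>u. norm (u - x) < \<delta> \<longrightarrow>
      f u \<ge> f x + ereal (v \<bullet> (u - x) - \<epsilon> * norm (u - x)))}"

definition lim_subdiff :: "('a::euclidean_space \<Rightarrow> ereal) \<Rightarrow> 'a \<Rightarrow> 'a set" where
  "lim_subdiff f x = {v. finite_at f x \<and> (\<exists>xs vs. xs \<longlonglongrightarrow> x \<and> (\<lambda>k. f (xs k)) \<longlonglongrightarrow> f x \<and>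
      vs \<longlonglongrightarrow> v \<and> (\<forall>k. vs k \<in> reg_subdiff f (xs k)))}"

definition reg_normal_cone :: "'c::euclidean_space set \<Rightarrow> 'c \<Rightarrow> 'c set" where
  "reg_normal_cone C x = {v. x \<in> C \<and> (\<forall>\<epsilon>>0. \<exists>\<delta>>0. \<forall>y\<in>C. norm (y - x) < \<delta> \<longrightarrow>
      v \<bullet> (y - x) \<le> \<epsilon> * norm (y - x))}"

definition lim_normal_cone :: "'c::euclidean_space set \<Rightarrow> 'c \<Rightarrow> 'c set" where
  "lim_normal_cone C x = {v. x \<in> C \<and> (\<exists>xs vs. (\<forall>k. xs k \<in> C \<and> vs k \<in> reg_normal_cone C (xs k))
      \<and> xs \<longlonglongrightarrow> x \<and> vs \<longlonglongrightarrow> v)}"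

definition locally_closed :: "'c::euclidean_space set \<Rightarrow> 'c \<Rightarrow> bool" where
  "locally_closed C x \<longleftrightarrow> (\<exists>e>0. closed (C \<inter> cball x e))"

definition clarke_regular :: "'c::euclidean_space set \<Rightarrow> 'c \<Rightarrow> bool" where
  "clarke_regular C x \<longleftrightarrow> x \<in> C \<and> locally_closed C x \<and> lim_normal_cone C x = reg_normal_cone C x"

definition epi :: "('a \<Rightarrow> ereal) \<Rightarrow> ('a \<times> real) set" where
  "epi f = {(x, \<alpha>). f x \<le> ereal \<alpha>}"

definition subdiff_regular :: "('a::euclidean_space \<Rightarrow> ereal) \<Rightarrow> 'a \<Rightarrow> bool" where
  "subdiff_regular f x \<longleftrightarrow> finite_at f x \<and> clarke_regular (epi f) (x, real_of_ereal (f x))"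

definition outer_lim_within :: "'a::metric_space set \<Rightarrow> ('a \<Rightarrow> 'b::metric_space set) \<Rightarrow> 'a \<Rightarrow> 'b set" where
  "outer_lim_within M S xb = {v. \<exists>xs vs. (\<forall>k. xs k \<in> M \<and> vs k \<in> S (xs k)) \<and>
      xs \<longlonglongrightarrow> xb \<and> vs \<longlonglongrightarrow> v}"

definition inner_lim_within :: "'a::metric_space set \<Rightarrow> ('a \<Rightarrow> 'b::metric_space set) \<Rightarrow> 'a \<Rightarrow> 'b set" where
  "inner_lim_within M S xb = {v. \<forall>xs. (\<forall>k. xs k \<in> M) \<and> xs \<longlonglongrightarrow> xb \<longrightarrow>
      (\<exists>vs k0. (\<forall>k\<ge>k0. vs k \<in> S (xs k)) \<and> vs \<longlonglongrightarrow> v)}"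

definition partly_smooth :: "('a::euclidean_space \<Rightarrow> ereal) \<Rightarrow> ('a \<Rightarrow> real) \<Rightarrow>
    ('a \<Rightarrow> 'b::euclidean_space) \<Rightarrow> 'a set \<Rightarrow> 'a \<Rightarrow> bool" where
  "partly_smooth f fhat \<Phi> M xb \<longleftrightarrow>
     xb \<in> M \<and>
     (\<exists>U. xb \<in> U \<and> C2_on U fhat \<and> (\<forall>x\<in>M \<inter> U. f x = ereal (fhat x))) \<and>
     (\<exists>\<epsilon>>0. \<forall>x\<in>M. dist x xb < \<epsilon> \<longrightarrow> subdiff_regular f x \<and> lim_subdiff f x \<noteq> {}) \<and>
     normal_sp \<Phi> xb = par (lim_subdiff f xb) \<and>
     outer_lim_within M (lim_subdiff f) xb = lim_subdiff f xb \<and>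
     inner_lim_within M (lim_subdiff f) xb = lim_subdiff f xb"

definition locally_lsc :: "('a::euclidean_space \<Rightarrow> ereal) \<Rightarrow> 'a \<Rightarrow> bool" where
  "locally_lsc f xb \<longleftrightarrow> (\<exists>\<epsilon>>0. \<forall>\<alpha>. ereal \<alpha> \<le> f xb + ereal \<epsilon> \<longrightarrow>
      closed {x \<in> cball xb \<epsilon>. f x \<le> ereal \<alpha>})"

definition prox_regular :: "('a::euclidean_space \<Rightarrow> ereal) \<Rightarrow> 'a \<Rightarrow> 'a \<Rightarrow> bool" where
  "prox_regular f xb vb \<longleftrightarrow> finite_at f xb \<and> locally_lsc f xb \<and> vb \<in> lim_subdiff f xb \<and>
     (\<exists>\<epsilon>>0. \<exists>\<rho>\<ge>0. \<forall>x' v'. dist (x', v') (xb, vb) \<le> \<epsilon> \<and> v' \<in> lim_subdiff f x' \<and>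
        f x' \<le> f xb + ereal \<epsilon> \<longrightarrow>
        (\<forall>u. dist u xb \<le> \<epsilon> \<longrightarrow>
           f u \<ge> f x' + ereal (v' \<bullet> (u - x') - \<rho> / 2 * (norm (u - x'))\<^sup>2)))"

definition subdiff_continuous :: "('a::euclidean_space \<Rightarrow> ereal) \<Rightarrow> 'a \<Rightarrow> 'a \<Rightarrow> bool" where
  "subdiff_continuous f xb vb \<longleftrightarrow> vb \<in> lim_subdiff f xb \<and>
     (\<forall>xs vs. xs \<longlonglongrightarrow> xb \<and> vs \<longlonglongrightarrow> vb \<and> (\<forall>k. vs k \<in> lim_subdiff f (xs k)) \<longrightarrow>
        (\<lambda>k. f (xs k)) \<longlonglongrightarrow> f xb)"

definition prox_bounded :: "('a::euclidean_space \<Rightarrow> ereal) \<Rightarrow> bool" where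
  "prox_bounded f \<longleftrightarrow> (\<exists>\<alpha>::real. \<exists>c::real. \<forall>x. f x + ereal (\<alpha> * (norm x)\<^sup>2) \<ge> ereal c)"

definition prox :: "real \<Rightarrow> ('a::euclidean_space \<Rightarrow> ereal) \<Rightarrow> 'a \<Rightarrow> 'a set" where
  "prox r f x = {w. \<forall>u. f w + ereal ((norm (w - x))\<^sup>2 / (2 * r)) \<le> f u + ereal ((norm (u - x))\<^sup>2 / (2 * r))}"

end

theory Submission
  imports Defs
begin

(*
  Near (xb, vb), a point x of M and a vector v such that
  v - grad fhat x is normal to M at x always satisfy the prox-regularity inequality of f:
  otherwise unit normals separating v from the proximal subgradients at x would converge to a
  nonzero y in the range of the adjoint of the derivative of Phi at xb, that is, parallel to the
  limiting subdifferential at xb.  As vb lies in its relative interior, some subgradient a at xb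
  has <y, a - vb> < 0, and by inner semicontinuity of the subdifferential along M and
  prox-regularity, a is approximated by proximal subgradients along the sequence, which
  contradicts the separation.  For small r the prox-regularity inequality near xb and
  prox-boundedness far from xb then make x the unique proximal point of x + r v.
  Since v - grad fhat x is normal to M exactly when v = grad_x L(x, mu) for a multiplier mu,
  computing prox_rf z amounts to solving z = x + r grad_x L(x, mu), Phi x = 0.  For small r this
  system has an invertible derivative at (xb, mu_b), so prox_rf is C^1 by the inverse function
  theorem, and projecting the differentiated system onto the tangent space of M gives the formula.
*)

section \<open>Orthogonal projections, adjoints and inverses\<close>

lemma orth_proj_unique:
  fixes T :: "'a::euclidean_space set"
  assumes T: "subspace T" and y: "y \<in> T" and perp: "\<And>t. t \<in> T \<Longrightarrow> (a - y) \<bullet> t = 0"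
  shows "orth_proj T a = y"
proof -
  have "dist a y \<le> dist a z" if z: "z \<in> T" for z
  proof -
    have "(a - y) \<bullet> (y - z) = 0" using perp T y z subspace_diff by blast
    then have "(dist a z)\<^sup>2 = (dist a y)\<^sup>2 + (norm (y - z))\<^sup>2"
      by (simp add: dist_norm power2_norm_eq_inner algebra_simps inner_commute)
    then show ?thesis by (simp add: power2_le_imp_le)
  qed
  then show ?thesis
    unfolding orth_proj_def
    using closest_point_unique[OF subspace_imp_convex[OF T] closed_subspace[OF T] y] by simp
qed

lemma
  fixes T :: "'a::euclidean_space set"
  assumes T: "subspace T"
  shows orth_proj_in: "orth_proj T a \<in> T"
    and orth_proj_orthogonal: "t \<in> T \<Longrightarrow> (a - orth_proj T a) \<bullet> t = 0"
proof -
  obtain y z where y: "y \<in> span T" and z: "\<And>w. w \<in> span T \<Longrightarrow> orthogonal z w" and a: "a = y + z"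
    using orthogonal_subspace_decomp_exists by blast
  have yT: "y \<in> T" using y T by (metis span_eq_iff)
  have perp: "\<And>t. t \<in> T \<Longrightarrow> (a - y) \<bullet> t = 0"
    using z a span_base by (fastforce simp: orthogonal_def)
  have "orth_proj T a = y" by (rule orth_proj_unique[OF T yT perp])
  then show "orth_proj T a \<in> T" "t \<in> T \<Longrightarrow> (a - orth_proj T a) \<bullet> t = 0"
    using yT perp by auto
qed

lemma orth_proj_id:
  fixes T :: "'a::euclidean_space set"
  assumes "subspace T" "a \<in> T"
  shows "orth_proj T a = a"
  using orth_proj_unique[OF assms] by simp

lemma orth_proj_add_orthogonal:
  fixes T :: "'a::euclidean_space set"
  assumes T: "subspace T" and n: "\<And>t. t \<in> T \<Longrightarrow> n \<bullet> t = 0"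
  shows "orth_proj T (a + n) = orth_proj T a"
proof (rule orth_proj_unique[OF T orth_proj_in[OF T]])
  fix t assume t: "t \<in> T"
  then show "(a + n - orth_proj T a) \<bullet> t = 0"
    using orth_proj_orthogonal[OF T t] n[OF t] by (simp add: inner_diff_left inner_add_left)
qed

lemma orth_proj_diff:
  fixes T :: "'a::euclidean_space set"
  assumes T: "subspace T"
  shows "orth_proj T (a - b) = orth_proj T a - orth_proj T b"
proof (rule orth_proj_unique[OF T])
  show "orth_proj T a - orth_proj T b \<in> T" using orth_proj_in[OF T] T subspace_diff by blast
  fix t assume t: "t \<in> T"
  then show "(a - b - (orth_proj T a - orth_proj T b)) \<bullet> t = 0"
    using orth_proj_orthogonal[OF T t, of a] orth_proj_orthogonal[OF T t, of b]
    by (simp add: inner_diff_left algebra_simps)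
qed

lemma orthogonal_kernel_imp_in_range_adjoint:
  fixes L :: "'a::euclidean_space \<Rightarrow> 'b::euclidean_space"
  assumes L: "linear L" and w: "\<And>h. L h = 0 \<Longrightarrow> w \<bullet> h = 0"
  shows "w \<in> range (adjoint L)"
proof -
  let ?R = "range (adjoint L)"
  have sub: "subspace ?R"
    using subspace_UNIV linear_subspace_image adjoint_linear[OF L] by blast
  obtain y z where y: "y \<in> span ?R" and z: "\<And>u. u \<in> span ?R \<Longrightarrow> orthogonal z u" and wyz: "w = y + z"
    using orthogonal_subspace_decomp_exists by blast
  have "L z \<bullet> \<eta> = 0" for \<eta>
    using z[of "adjoint L \<eta>"] span_base[of "adjoint L \<eta>" ?R] adjoint_works[OF L]
    by (auto simp: orthogonal_def)
  then have "L z = 0" by (metis inner_eq_zero_iff)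
  then have "w \<bullet> z = 0" by (rule w)
  moreover have "y \<bullet> z = 0" using z[OF y] by (simp add: orthogonal_def inner_commute)
  ultimately have "z = 0" using wyz by (simp add: inner_add_left)
  then show ?thesis using wyz y sub by (metis add.right_neutral span_eq_iff)
qed

lemma surj_imp_adjoint_eq_0:
  fixes L :: "'a::euclidean_space \<Rightarrow> 'b::euclidean_space"
  assumes L: "linear L" and "surj L" and "adjoint L \<eta> = 0"
  shows "\<eta> = 0"
proof -
  obtain h where "L h = \<eta>" using \<open>surj L\<close> by (metis surjD)
  then have "\<eta> \<bullet> \<eta> = h \<bullet> adjoint L \<eta>" using adjoint_works[OF L] by simp
  then show ?thesis using \<open>adjoint L \<eta> = 0\<close> by simp
qed

lemma adjoint_eq_sum_Basis:
  fixes L :: "'a::euclidean_space \<Rightarrow> 'b::euclidean_space"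
  assumes L: "linear L"
  shows "adjoint L \<eta> = (\<Sum>b\<in>Basis. (\<eta> \<bullet> L b) *\<^sub>R b)"
  by (subst euclidean_representation[symmetric]) (simp add: adjoint_clauses(2)[OF L])

lemma linear_blinfun_apply: "linear (blinfun_apply B)"
  using blinfun.bounded_linear_right bounded_linear.linear by blast

definition blinfun_inv :: "('c::euclidean_space \<Rightarrow>\<^sub>L 'c) \<Rightarrow> ('c \<Rightarrow>\<^sub>L 'c)" where
  "blinfun_inv B = Blinfun (inv (blinfun_apply B))"

lemma
  fixes B :: "'c::euclidean_space \<Rightarrow>\<^sub>L 'c"
  assumes "inj (blinfun_apply B)"
  shows blinfun_apply_blinfun_inv: "blinfun_apply (blinfun_inv B) = inv (blinfun_apply B)"
    and blinfun_inv_left: "blinfun_inv B (B x) = x"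
    and blinfun_inv_right: "B (blinfun_inv B y) = y"
proof -
  obtain g where g: "linear g" "\<And>x. g (B x) = x" "\<And>x. B (g x) = x"
    using linear_injective_isomorphism[OF linear_blinfun_apply assms] by auto
  then have "inv (blinfun_apply B) = g" by (metis inv_equality)
  then show "blinfun_apply (blinfun_inv B) = inv (blinfun_apply B)"
    unfolding blinfun_inv_def using g(1)
    by (simp add: bounded_linear_Blinfun_apply linear_conv_bounded_linear)
  then show "blinfun_inv B (B x) = x" "B (blinfun_inv B y) = y"
    using g \<open>inv (blinfun_apply B) = g\<close> by auto
qed

lemma norm_blinfun_inv_diff_le:
  fixes B B0 :: "'c::euclidean_space \<Rightarrow>\<^sub>L 'c"
  assumes i0: "inj (blinfun_apply B0)" and i: "inj (blinfun_apply B)"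
    and small: "2 * norm (blinfun_inv B0) * norm (B - B0) \<le> 1"
  shows "norm (blinfun_inv B - blinfun_inv B0) \<le> 2 * (norm (blinfun_inv B0))\<^sup>2 * norm (B - B0)"
proof -
  let ?K = "norm (blinfun_inv B0)"
  have lower: "norm x \<le> 2 * ?K * norm (B x)" for x
  proof -
    have "norm x \<le> ?K * norm (B0 x)"
      using norm_blinfun[of "blinfun_inv B0" "B0 x"] blinfun_inv_left[OF i0] by simp
    also have "B0 x = B x - (B - B0) x" by (simp add: blinfun.diff_left)
    also have "?K * norm (B x - (B - B0) x) \<le> ?K * (norm (B x) + norm (B - B0) * norm x)"
      by (rule mult_left_mono) (meson norm_blinfun norm_triangle_le_diff add_left_mono order_trans, simp)
    also have "\<dots> \<le> ?K * norm (B x) + (1/2) * norm x"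
      using small mult_right_mono[OF small norm_ge_zero[of x]] by (simp add: algebra_simps)
    finally show ?thesis by simp
  qed
  have norm_inv: "norm (blinfun_inv B) \<le> 2 * ?K"
    by (rule norm_blinfun_bound) (use lower[of "blinfun_inv B _"] blinfun_inv_right[OF i] in auto)
  have "blinfun_inv B - blinfun_inv B0 = blinfun_inv B o\<^sub>L (B0 - B) o\<^sub>L blinfun_inv B0"
    by (rule blinfun_eqI)
      (simp add: blinfun.diff_left blinfun.diff_right blinfun_inv_left[OF i] blinfun_inv_right[OF i0])
  then have "norm (blinfun_inv B - blinfun_inv B0) \<le> norm (blinfun_inv B o\<^sub>L (B0 - B)) * ?K"
    by (simp add: norm_blinfun_compose)
  also have "\<dots> \<le> norm (blinfun_inv B) * norm (B0 - B) * ?K"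
    by (intro mult_right_mono norm_blinfun_compose) simp
  also have "\<dots> \<le> (2 * ?K) * norm (B - B0) * ?K"
    using norm_inv by (intro mult_right_mono) (auto simp: norm_minus_commute intro: mult_right_mono)
  finally show ?thesis by (simp add: power2_eq_square algebra_simps)
qed

lemma continuous_on_blinfun_inv:
  fixes A :: "'d::metric_space \<Rightarrow> ('c::euclidean_space \<Rightarrow>\<^sub>L 'c)"
  assumes cA: "continuous_on V A" and inj: "\<And>y. y \<in> V \<Longrightarrow> inj (blinfun_apply (A y))"
  shows "continuous_on V (\<lambda>y. blinfun_inv (A y))"
  unfolding continuous_on_iff
proof (intro ballI allI impI)
  fix y0 and e :: real assume y0: "y0 \<in> V" and e: "0 < e"
  let ?K = "norm (blinfun_inv (A y0))"
  define e' where "e' = min (1 / (2 * ?K + 1)) (e / (2 * ?K\<^sup>2 + 1))"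
  have p1: "0 < 2 * ?K + 1" and p2: "0 < 2 * ?K\<^sup>2 + 1"
    by (auto intro: add_nonneg_pos)
  have "0 < e'" unfolding e'_def using e p1 p2 by simp
  then obtain d where d: "d > 0" "\<And>y. y \<in> V \<Longrightarrow> dist y y0 < d \<Longrightarrow> norm (A y - A y0) < e'"
    using cA y0 unfolding continuous_on_iff dist_norm by metis
  show "\<exists>d>0. \<forall>y\<in>V. dist y y0 < d \<longrightarrow> dist (blinfun_inv (A y)) (blinfun_inv (A y0)) < e"
  proof (intro exI[of _ d] conjI ballI impI d(1))
    fix y assume y: "y \<in> V" "dist y y0 < d"
    have n: "norm (A y - A y0) < e'" using d(2)[OF y] .
    have "2 * ?K * norm (A y - A y0) \<le> 2 * ?K * (1 / (2 * ?K + 1))"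
      using n unfolding e'_def by (intro mult_left_mono) auto
    also have "\<dots> \<le> 1" using p1 by (simp add: divide_simps)
    finally have "norm (blinfun_inv (A y) - blinfun_inv (A y0)) \<le> 2 * ?K\<^sup>2 * norm (A y - A y0)"
      by (rule norm_blinfun_inv_diff_le[OF inj[OF y0] inj[OF y(1)]])
    also have "\<dots> \<le> 2 * ?K\<^sup>2 * (e / (2 * ?K\<^sup>2 + 1))"
      using n unfolding e'_def by (intro mult_left_mono) auto
    also have "\<dots> < e" using e p2 by (simp add: divide_simps)
    finally show "dist (blinfun_inv (A y)) (blinfun_inv (A y0)) < e" by (simp add: dist_norm)
  qed
qed

lemma inverse_function_theorem_blinfun_inv:
  fixes F :: "'c::euclidean_space \<Rightarrow> 'c" and F' :: "'c \<Rightarrow> ('c \<Rightarrow>\<^sub>L 'c)"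
  assumes "open S" and der: "\<And>x. x \<in> S \<Longrightarrow> (F has_derivative blinfun_apply (F' x)) (at x)"
    and "continuous_on S F'" and "c0 \<in> S" and inj0: "inj (blinfun_apply (F' c0))"
  obtains U V g where "open U" "U \<subseteq> S" "c0 \<in> U" "open V" "F c0 \<in> V" "homeomorphism U V F g"
    "\<And>y. y \<in> V \<Longrightarrow> inj (blinfun_apply (F' (g y)))"
    "\<And>y. y \<in> V \<Longrightarrow> (g has_derivative blinfun_apply (blinfun_inv (F' (g y)))) (at y)"
proof -
  have "blinfun_inv (F' c0) o\<^sub>L F' c0 = id_blinfun"
    by (rule blinfun_eqI) (simp add: blinfun_inv_left[OF inj0])
  from inverse_function_theorem[OF assms(1-4) this]
  obtain U V g g' where UV: "open U" "U \<subseteq> S" "c0 \<in> U" "open V" "F c0 \<in> V" "homeomorphism U V F g"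
    and dg: "\<And>y. y \<in> V \<Longrightarrow> (g has_derivative (g' y)) (at y)"
    and g': "\<And>y. y \<in> V \<Longrightarrow> g' y = inv (blinfun_apply (F'(g y)))"
    and bij: "\<And>y. y \<in> V \<Longrightarrow> bij (blinfun_apply (F'(g y)))" by blast
  have inj: "\<And>y. y \<in> V \<Longrightarrow> inj (blinfun_apply (F' (g y)))" using bij bij_is_inj by blast
  show ?thesis
  proof (rule that[OF UV inj])
    fix y assume "y \<in> V"
    then show "(g has_derivative blinfun_apply (blinfun_inv (F' (g y)))) (at y)"
      using dg g' blinfun_apply_blinfun_inv[OF inj] by metis
  qed
qed

lemma C1_on_inverse_slice:
  fixes g :: "'a::euclidean_space \<times> 'b::euclidean_space \<Rightarrow> 'a \<times> 'b"
    and B :: "'a \<times> 'b \<Rightarrow> (('a \<times> 'b) \<Rightarrow>\<^sub>L ('a \<times> 'b))"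
  assumes W: "open W" "\<And>z. z \<in> W \<Longrightarrow> (z, 0) \<in> V"
    and cont: "continuous_on V (\<lambda>y. B (g y))" and inj: "\<And>y. y \<in> V \<Longrightarrow> inj (blinfun_apply (B (g y)))"
    and dg: "\<And>y. y \<in> V \<Longrightarrow> (g has_derivative blinfun_inv (B (g y))) (at y)"
  shows "C1_on W (\<lambda>z. fst (g (z, 0)))"
    and "z \<in> W \<Longrightarrow>
      frechet_derivative (\<lambda>z. fst (g (z, 0))) (at z) = (\<lambda>w. fst (blinfun_inv (B (g (z, 0))) (w, 0)))"
proof -
  define D where "D z = Blinfun (\<lambda>w. fst (blinfun_inv (B (g (z, 0))) (w, 0)))" for z
  have D_apply: "D z w = fst (blinfun_inv (B (g (z, 0))) (w, 0))" for z w
  proof -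
    have "bounded_linear (\<lambda>w::'a. fst (blinfun_inv (B (g (z, 0))) (w, 0)))"
      by (intro bounded_linear_compose[OF bounded_linear_fst]
          bounded_linear_compose[OF blinfun.bounded_linear_right] bounded_linear_Pair
          bounded_linear_ident bounded_linear_zero)
    then show ?thesis by (simp add: D_def bounded_linear_Blinfun_apply)
  qed
  have deriv: "((\<lambda>z. fst (g (z, 0))) has_derivative D z) (at z)" if "z \<in> W" for z
    using has_derivative_fst[OF has_derivative_compose[OF
          has_derivative_Pair[OF has_derivative_ident has_derivative_const] dg[OF W(2)[OF that]]]]
    by (simp add: D_apply[abs_def])
  then show "z \<in> W \<Longrightarrow>
      frechet_derivative (\<lambda>z. fst (g (z, 0))) (at z) = (\<lambda>w. fst (blinfun_inv (B (g (z, 0))) (w, 0)))"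
    by (metis D_apply frechet_derivative_at)
  have "continuous_on W (\<lambda>z. blinfun_inv (B (g (z, 0))))"
    by (rule continuous_on_compose2[OF continuous_on_blinfun_inv[OF cont inj]])
      (auto intro!: continuous_intros W(2))
  then have "continuous_on W D"
    by (intro continuous_on_blinfun_componentwise) (simp add: D_apply continuous_intros)
  with deriv show "C1_on W (\<lambda>z. fst (g (z, 0)))"
    unfolding C1_on_def using W(1) by blast
qed

lemma eventually_at_right_0_mult_less:
  fixes C e :: real
  assumes "e > 0"
  shows "eventually (\<lambda>r. r * C < e) (at_right 0)"
proof -
  have "((\<lambda>r. r * C) \<longlongrightarrow> 0 * C) (at_right 0)"
    by (intro tendsto_intros)
  then show ?thesis using assms by (auto dest: order_tendstoD(2))
qed

lemma not_eventually_nhds_imp_seq: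
  fixes a :: "'a::metric_space"
  assumes "\<not> eventually P (nhds a)"
  obtains X where "X \<longlonglongrightarrow> a" "\<And>k. \<not> P (X k)"
proof -
  have "\<exists>y. dist y a < inverse (Suc k) \<and> \<not> P y" for k
    using assms unfolding eventually_nhds_metric
    by (metis dist_commute inverse_positive_iff_positive of_nat_0_less_iff zero_less_Suc)
  then obtain X where X: "\<And>k. dist (X k) a < inverse (Suc k)" "\<And>k. \<not> P (X k)" by metis
  have upper: "eventually (\<lambda>k. dist (X k) a \<le> inverse (real (Suc k))) sequentially"
    using X(1) by (intro always_eventually allI less_imp_le)
  have "(\<lambda>k. dist (X k) a) \<longlonglongrightarrow> 0"
    by (intro tendsto_sandwich[OF _ upper tendsto_const LIMSEQ_inverse_real_of_nat]) simp
  then have "X \<longlonglongrightarrow> a" by (rule tendsto_dist_iff[THEN iffD2])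
  then show ?thesis using X(2) by (rule that)
qed

lemma ereal_halfspace_convex_closed:
  fixes F :: ereal and w :: "'a::euclidean_space"
  shows "convex {g. F \<ge> ereal (c + g \<bullet> w)} \<and> closed {g. F \<ge> ereal (c + g \<bullet> w)}"
proof (cases F)
  case (real r)
  then have "{g. F \<ge> ereal (c + g \<bullet> w)} = {g. w \<bullet> g \<le> r - c}" by (auto simp: inner_commute)
  then show ?thesis using convex_halfspace_le closed_halfspace_le by metis
next
  case PInf
  then have "{g. F \<ge> ereal (c + g \<bullet> w)} = UNIV" by auto
  then show ?thesis by simp
next
  case MInf
  then have "{g. F \<ge> ereal (c + g \<bullet> w)} = {}" by auto
  then show ?thesis by simp
qed

lemma rel_interior_step_against:
  fixes C :: "'a::euclidean_space set"
  assumes v: "v \<in> rel_interior C" and y: "y \<in> par C" "y \<noteq> 0" and s: "s > 0"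
  obtains a where "a \<in> C" "dist a v < s" "y \<bullet> (a - v) < 0"
proof -
  obtain e where e: "e > 0" "ball v e \<inter> affine hull C \<subseteq> C"
    using v by (auto simp: mem_rel_interior_ball)
  obtain a1 b1 where ab1: "y = a1 - b1" "a1 \<in> affine hull C" "b1 \<in> affine hull C"
    using y(1) unfolding par_def by blast
  define t where "t = min (e / 2) (s / 2) / norm y"
  have t: "t > 0" "t * norm y < e" "t * norm y < s" using e s y(2) by (auto simp: t_def)
  define a where "a = v - t *\<^sub>R y"
  have "v \<in> affine hull C" by (rule hull_inc) (use v rel_interior_subset in blast)
  moreover have "a = v + t *\<^sub>R (b1 - a1)" unfolding a_def ab1(1) by (simp add: scaleR_diff_right)
  ultimately have "a \<in> affine hull C"
    using mem_affine_3_minus[OF affine_affine_hull _ ab1(3) ab1(2)] by simp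
  moreover have dist: "dist a v = t * norm y" using t(1) by (simp add: a_def dist_norm)
  ultimately have "a \<in> C" using e t(2) by (auto simp: dist_commute)
  moreover have "y \<bullet> (a - v) < 0" using t(1) y(2) by (simp add: a_def)
  ultimately show ?thesis using that dist t(3) by simp
qed

section \<open>Proximal mappings\<close>

lemma prox_bounded_imp_quadratic_minorant:
  fixes f :: "'a::euclidean_space \<Rightarrow> ereal"
  assumes "prox_bounded f"
  obtains A c where "A \<ge> 0" "\<And>u. f u \<ge> ereal (c - A * (norm u)\<^sup>2)"
proof -
  obtain \<alpha> c where pb: "\<And>u. f u + ereal (\<alpha> * (norm u)\<^sup>2) \<ge> ereal c"
    using assms unfolding prox_bounded_def by blast
  have "f u \<ge> ereal (c - \<bar>\<alpha>\<bar> * (norm u)\<^sup>2)" for u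
  proof (cases "f u")
    case (real y)
    moreover have "\<alpha> * (norm u)\<^sup>2 \<le> \<bar>\<alpha>\<bar> * (norm u)\<^sup>2" by (intro mult_right_mono) auto
    ultimately show ?thesis using pb[of u] by simp
  qed (use pb[of u] in auto)
  then show ?thesis by (rule that[OF abs_ge_zero])
qed

lemma prox_eq_singletonI:
  fixes f :: "'a::euclidean_space \<Rightarrow> ereal"
  assumes "\<And>u. u \<noteq> x \<Longrightarrow>
    f x + ereal ((norm (x - z))\<^sup>2 / (2 * r)) < f u + ereal ((norm (u - z))\<^sup>2 / (2 * r))"
  shows "prox r f z = {x}"
proof -
  have "x \<in> prox r f z"
    unfolding prox_def
  proof (intro CollectI allI)
    fix u show "f x + ereal ((norm (x - z))\<^sup>2 / (2 * r)) \<le> f u + ereal ((norm (u - z))\<^sup>2 / (2 * r))"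
      using assms[of u] by (cases "u = x") auto
  qed
  moreover have "w = x" if "w \<in> prox r f z" for w
    using that assms[of w] unfolding prox_def by (metis (mono_tags, lifting) mem_Collect_eq not_le)
  ultimately show ?thesis by blast
qed

lemma prox_objective_far_lower_bound:
  fixes f :: "'a::euclidean_space \<Rightarrow> ereal"
  assumes minor: "f u \<ge> ereal (c - A * (norm u)\<^sup>2)" and A: "A \<ge> 0"
    and r: "r > 0" "r * (32 * A + 1) \<le> 1"
    and z: "norm (z - x0) \<le> e / 2" and u: "e < norm (u - x0)"
  shows "f u + ereal ((norm (u - z))\<^sup>2 / (2 * r)) \<ge> ereal (c - 2 * A * (norm x0)\<^sup>2 + e\<^sup>2 / (16 * r))"
proof -
  define d where "d = norm (u - x0)"
  have e0: "0 \<le> e" using z norm_ge_zero[of "z - x0"] by linarith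
  then have d0: "d > 0" and ed: "e\<^sup>2 \<le> d\<^sup>2" using u by (auto simp: d_def intro: power_mono)
  have "norm u \<le> norm x0 + d" using norm_triangle_ineq[of x0 "u - x0"] by (simp add: d_def)
  then have "(norm u)\<^sup>2 \<le> (norm x0 + d)\<^sup>2" by (simp add: power_mono)
  also have "\<dots> \<le> 2 * (norm x0)\<^sup>2 + 2 * d\<^sup>2"
    using zero_le_power2[of "norm x0 - d"] unfolding power2_sum power2_diff by linarith
  finally have minor_bound: "A * (norm u)\<^sup>2 \<le> 2 * A * (norm x0)\<^sup>2 + 2 * A * d\<^sup>2"
    using mult_left_mono[OF _ A] by (fastforce simp: algebra_simps)
  have "norm (u - x0) \<le> norm (u - z) + norm (z - x0)"
    using norm_triangle_ineq[of "u - z" "z - x0"] by simp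
  then have "d / 2 \<le> norm (u - z)" using z u by (simp add: d_def)
  then have "d\<^sup>2 / 4 \<le> (norm (u - z))\<^sup>2"
    using d0 power_mono[of "d / 2" "norm (u - z)" 2] by (simp add: power_divide)
  then have "(d\<^sup>2 / 4) / (2 * r) \<le> (norm (u - z))\<^sup>2 / (2 * r)"
    using r(1) by (intro divide_right_mono) auto
  then have dist_bound: "d\<^sup>2 / (8 * r) \<le> (norm (u - z))\<^sup>2 / (2 * r)" by simp
  have "32 * A * r * d\<^sup>2 \<le> 1 * d\<^sup>2"
    using r by (intro mult_right_mono) (auto simp: algebra_simps)
  then have "e\<^sup>2 \<le> 2 * d\<^sup>2 - 32 * A * r * d\<^sup>2" using ed by linarith
  then have "e\<^sup>2 / (16 * r) \<le> d\<^sup>2 / (8 * r) - 2 * A * d\<^sup>2"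
    using r(1) by (simp add: field_simps)
  then have "c - 2 * A * (norm x0)\<^sup>2 + e\<^sup>2 / (16 * r) \<le> c - A * (norm u)\<^sup>2 + (norm (u - z))\<^sup>2 / (2 * r)"
    using minor_bound dist_bound by linarith
  then show ?thesis using minor by (cases "f u") auto
qed

definition prox_derivative_formula ::
    "real \<Rightarrow> ('a::euclidean_space \<Rightarrow> real) \<Rightarrow> ('a \<Rightarrow> 'b::euclidean_space) \<Rightarrow> ('a \<Rightarrow> 'a) \<Rightarrow> 'a \<Rightarrow> bool" where
  "prox_derivative_formula r fhat \<Phi> p z \<longleftrightarrow>
    (let x = p z; T = tangent_sp \<Phi> x in
      (\<exists>!\<mu>. grad (\<lambda>u. lagr fhat \<Phi> u \<mu>) x = (1 / r) *\<^sub>R (z - x)) \<and>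
      (let \<mu> = (THE \<mu>. grad (\<lambda>u. lagr fhat \<Phi> u \<mu>) x = (1 / r) *\<^sub>R (z - x));
           A = (\<lambda>h. orth_proj T (h + r *\<^sub>R hess (\<lambda>u. lagr fhat \<Phi> u \<mu>) x h))
       in inj_on A T \<and> A ` T = T \<and>
          (\<forall>w. frechet_derivative p (at z) w = the_inv_into T A (orth_proj T w))))"

definition prox_C1_near ::
    "real \<Rightarrow> ('a::euclidean_space \<Rightarrow> ereal) \<Rightarrow> ('a \<Rightarrow> real) \<Rightarrow> ('a \<Rightarrow> 'b::euclidean_space) \<Rightarrow>
      'a set \<Rightarrow> 'a \<Rightarrow> bool" where
  "prox_C1_near r f fhat \<Phi> S z0 \<longleftrightarrow>
    (\<exists>W p. open W \<and> z0 \<in> W \<and> (\<forall>z\<in>W. prox r f z = {p z} \<and> p z \<in> S) \<and> C1_on W p \<and>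
       (\<forall>z\<in>W. prox_derivative_formula r fhat \<Phi> p z))"

lemma prox_C1_near_mono:
  "prox_C1_near r f fhat \<Phi> S z0 \<Longrightarrow> S \<subseteq> S' \<Longrightarrow> prox_C1_near r f fhat \<Phi> S' z0"
  unfolding prox_C1_near_def by blast

section \<open>The partly smooth setting\<close>

locale partly_smooth_prox =
  fixes f :: "'a::euclidean_space \<Rightarrow> ereal" and fhat :: "'a \<Rightarrow> real" and \<Phi> :: "'a \<Rightarrow> 'b::euclidean_space"
    and M U :: "'a set" and xb vb :: 'a
    and Df :: "'a \<Rightarrow> ('a \<Rightarrow>\<^sub>L real)" and D2f :: "'a \<Rightarrow> ('a \<Rightarrow>\<^sub>L ('a \<Rightarrow>\<^sub>L real))"
    and D\<Phi> :: "'a \<Rightarrow> ('a \<Rightarrow>\<^sub>L 'b)" and D2\<Phi> :: "'a \<Rightarrow> ('a \<Rightarrow>\<^sub>L ('a \<Rightarrow>\<^sub>L 'b))"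
    and \<epsilon> \<rho> :: real
  assumes U: "open U" "xb \<in> U" "xb \<in> M"
    and M_eq: "M \<inter> U = {x \<in> U. \<Phi> x = 0}"
    and f_eq_fhat: "\<And>x. x \<in> M \<inter> U \<Longrightarrow> f x = ereal (fhat x)"
    and Df: "\<And>x. x \<in> U \<Longrightarrow> (fhat has_derivative blinfun_apply (Df x)) (at x)"
    and D2f: "\<And>x. x \<in> U \<Longrightarrow> (Df has_derivative blinfun_apply (D2f x)) (at x)"
    and D2f_cont: "continuous_on U D2f"
    and D\<Phi>: "\<And>x. x \<in> U \<Longrightarrow> (\<Phi> has_derivative blinfun_apply (D\<Phi> x)) (at x)"
    and D2\<Phi>: "\<And>x. x \<in> U \<Longrightarrow> (D\<Phi> has_derivative blinfun_apply (D2\<Phi> x)) (at x)"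
    and D2\<Phi>_cont: "continuous_on U D2\<Phi>"
    and D\<Phi>_surj: "surj (blinfun_apply (D\<Phi> xb))"
    and \<epsilon>: "\<epsilon> > 0" and \<rho>: "\<rho> \<ge> 0"
    and prox_reg: "\<And>x' v' u. dist (x', v') (xb, vb) \<le> \<epsilon> \<Longrightarrow> v' \<in> lim_subdiff f x' \<Longrightarrow>
        f x' \<le> f xb + ereal \<epsilon> \<Longrightarrow> dist u xb \<le> \<epsilon> \<Longrightarrow>
        f u \<ge> f x' + ereal (v' \<bullet> (u - x') - \<rho> / 2 * (norm (u - x'))\<^sup>2)"
    and vb_subdiff: "vb \<in> lim_subdiff f xb"
    and vb_ri: "vb \<in> rel_interior (lim_subdiff f xb)"
    and normal_eq_par: "range (adjoint (blinfun_apply (D\<Phi> xb))) = par (lim_subdiff f xb)"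
    and inner_lim: "inner_lim_within M (lim_subdiff f) xb = lim_subdiff f xb"
    and prox_bdd: "prox_bounded f"
begin

definition "grad_fhat x = (\<Sum>b\<in>Basis. Df x b *\<^sub>R b)"
(* The adjoint of D\<Phi> x, written in coordinates so that its continuity in x is immediate. *)
definition "adj x \<nu> = (\<Sum>b\<in>Basis. (\<nu> \<bullet> D\<Phi> x b) *\<^sub>R b)"
definition "grad_L x \<mu> = grad_fhat x + adj x \<mu>"
definition "hess_L x \<mu> h = (\<Sum>b\<in>Basis. D2f x h b *\<^sub>R b) + (\<Sum>b\<in>Basis. (\<mu> \<bullet> D2\<Phi> x h b) *\<^sub>R b)"
definition "prox_subgrad x v \<longleftrightarrow>
  (\<forall>u. dist u xb \<le> \<epsilon> \<longrightarrow> f u \<ge> f x + ereal (v \<bullet> (u - x) - \<rho> / 2 * (norm (u - x))\<^sup>2))"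

lemma adj_eq_adjoint: "adj x = adjoint (blinfun_apply (D\<Phi> x))"
  by (rule ext) (simp add: adj_def adjoint_eq_sum_Basis[OF linear_blinfun_apply])

lemma inner_adj: "adj x \<nu> \<bullet> h = \<nu> \<bullet> D\<Phi> x h"
  unfolding adj_eq_adjoint by (rule adjoint_clauses(2)[OF linear_blinfun_apply])

lemma bounded_linear_adj: "bounded_linear (adj x)"
  unfolding adj_def by (intro bounded_linear_intros)

lemma adj_diff: "adj x (a - b) = adj x a - adj x b"
  and adj_scaleR: "adj x (c *\<^sub>R \<nu>) = c *\<^sub>R adj x \<nu>"
  and adj_zero: "adj x 0 = 0"
  using bounded_linear_adj[of x]
  by (simp_all add: linear_diff linear_scale linear_0 bounded_linear.linear)

lemma adj_eq_0_if_surj: "surj (blinfun_apply (D\<Phi> x)) \<Longrightarrow> adj x \<nu> = 0 \<Longrightarrow> \<nu> = 0"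
  using surj_imp_adjoint_eq_0[OF linear_blinfun_apply] by (simp add: adj_eq_adjoint)

lemma grad_fhat_inner: "grad_fhat x \<bullet> h = Df x h"
proof -
  have "grad_fhat x \<bullet> h = (\<Sum>b\<in>Basis. Df x b * (b \<bullet> h))"
    unfolding grad_fhat_def by (simp add: inner_sum_left)
  also have "\<dots> = Df x (\<Sum>b\<in>Basis. (h \<bullet> b) *\<^sub>R b)"
    by (simp add: blinfun.sum_right blinfun.scaleR_right inner_commute mult.commute)
  finally show ?thesis by (simp add: euclidean_representation)
qed

lemma tangent_sp_eq: "x \<in> U \<Longrightarrow> tangent_sp \<Phi> x = {h. D\<Phi> x h = 0}"
  unfolding tangent_sp_def using D\<Phi> frechet_derivative_at by metis

lemma grad_lagr_eq: "x \<in> U \<Longrightarrow> grad (\<lambda>u. lagr fhat \<Phi> u \<mu>) x = grad_L x \<mu>"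
proof -
  assume x: "x \<in> U"
  have "((\<lambda>u. lagr fhat \<Phi> u \<mu>) has_derivative (\<lambda>h. Df x h + \<mu> \<bullet> D\<Phi> x h)) (at x)"
    unfolding lagr_def by (auto intro!: derivative_eq_intros Df D\<Phi> x)
  then have "frechet_derivative (\<lambda>u. lagr fhat \<Phi> u \<mu>) (at x) = (\<lambda>h. Df x h + \<mu> \<bullet> D\<Phi> x h)"
    using frechet_derivative_at by metis
  then show ?thesis
    unfolding grad_def grad_L_def grad_fhat_def adj_def by (simp add: scaleR_add_left sum.distrib)
qed

lemma has_derivative_grad_L:
  assumes x: "fst p \<in> U"
  shows "((\<lambda>q. grad_L (fst q) (snd q)) has_derivative
          (\<lambda>q. hess_L (fst p) (snd p) (fst q) + adj (fst p) (snd q))) (at p)"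
proof -
  have Df_b: "((\<lambda>q. Df (fst q) b) has_derivative (\<lambda>q. D2f (fst p) (fst q) b)) (at p)" for b
    using blinfun.FDERIV[OF D2f[OF x] has_derivative_const, of b]
      has_derivative_compose[OF has_derivative_fst[OF has_derivative_ident]]
    by (simp add: o_def)
  have D\<Phi>_b: "((\<lambda>q. D\<Phi> (fst q) b) has_derivative (\<lambda>q. D2\<Phi> (fst p) (fst q) b)) (at p)" for b
    using blinfun.FDERIV[OF D2\<Phi>[OF x] has_derivative_const, of b]
      has_derivative_compose[OF has_derivative_fst[OF has_derivative_ident]]
    by (simp add: o_def)
  have "((\<lambda>q. (\<Sum>b\<in>Basis. Df (fst q) b *\<^sub>R b) + (\<Sum>b\<in>Basis. (snd q \<bullet> D\<Phi> (fst q) b) *\<^sub>R b)) has_derivative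
     (\<lambda>h. (\<Sum>b\<in>Basis. D2f (fst p) (fst h) b *\<^sub>R b) +
          (\<Sum>b\<in>Basis. (snd p \<bullet> D2\<Phi> (fst p) (fst h) b + snd h \<bullet> D\<Phi> (fst p) b) *\<^sub>R b))) (at p)"
    by (intro has_derivative_add has_derivative_sum has_derivative_scaleR_left Df_b
        has_derivative_inner[OF has_derivative_snd[OF has_derivative_ident] D\<Phi>_b, simplified])
  then show ?thesis
    unfolding grad_L_def grad_fhat_def adj_def hess_L_def
    by (simp add: scaleR_add_left sum.distrib algebra_simps)
qed

lemma has_derivative_grad_L_fixed:
  assumes "x \<in> U"
  shows "((\<lambda>u. grad_L u \<mu>) has_derivative hess_L x \<mu>) (at x)"
  using has_derivative_compose[OF has_derivative_Pair[OF has_derivative_ident has_derivative_const]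
      has_derivative_grad_L[of "(x, \<mu>)"]] assms
  by (simp add: o_def adj_zero)

lemma hess_lagr_eq: "x \<in> U \<Longrightarrow> hess (\<lambda>u. lagr fhat \<Phi> u \<mu>) x = hess_L x \<mu>"
proof -
  assume x: "x \<in> U"
  have "(grad (\<lambda>u. lagr fhat \<Phi> u \<mu>) has_derivative hess_L x \<mu>) (at x)"
    by (rule has_derivative_transform_within_open[OF has_derivative_grad_L_fixed[OF x] U(1) x])
      (simp add: grad_lagr_eq)
  then show ?thesis unfolding hess_def using frechet_derivative_at by metis
qed

lemma bounded_linear_hess_L: "bounded_linear (hess_L x \<mu>)"
  unfolding hess_L_def[abs_def] by (intro bounded_linear_intros)

lemma continuous_on_fhat: "continuous_on U fhat"
  using Df has_derivative_continuous continuous_at_imp_continuous_on by blast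

lemma continuous_on_D\<Phi>: "continuous_on U D\<Phi>"
  using D2\<Phi> has_derivative_continuous continuous_at_imp_continuous_on by blast

lemma continuous_on_fst_comp:
  assumes "continuous_on U g"
  shows "continuous_on (U \<times> UNIV) (\<lambda>p. g (fst p))"
  by (rule continuous_on_compose2[OF assms continuous_on_fst[OF continuous_on_id]]) auto

lemma continuous_on_adj: "continuous_on (U \<times> UNIV) (\<lambda>p. adj (fst p) (snd p))"
  unfolding adj_def by (intro continuous_intros continuous_on_fst_comp continuous_on_D\<Phi>)

lemma continuous_on_adj_fixed: "continuous_on (U \<times> UNIV) (\<lambda>p. adj (fst p) \<nu>)"
  unfolding adj_def by (intro continuous_intros continuous_on_fst_comp continuous_on_D\<Phi>)

lemma continuous_on_hess_L: "continuous_on (U \<times> UNIV) (\<lambda>p. hess_L (fst p) (snd p) h)"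
  unfolding hess_L_def
  by (intro continuous_intros continuous_on_fst_comp D2f_cont D2\<Phi>_cont)

section \<open>Proximal subgradients along M\<close>

(* A local diffeomorphism at (xb, 0) whose inverse maps the slice {(y, 0)} into M; it provides
  curves in M with any prescribed tangent velocity. *)
definition "chart (p::'a \<times> 'b) = (fst p + adj xb (snd p), \<Phi> (fst p))"
definition "chart_deriv (p::'a \<times> 'b) = Blinfun (\<lambda>q. (fst q + adj xb (snd q), D\<Phi> (fst p) (fst q)))"

lemma chart_deriv_apply: "chart_deriv p q = (fst q + adj xb (snd q), D\<Phi> (fst p) (fst q))"
proof -
  have "bounded_linear (\<lambda>q::'a \<times> 'b. (fst q + adj xb (snd q), D\<Phi> (fst p) (fst q)))"
    by (intro bounded_linear_Pair bounded_linear_add bounded_linear_fst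
        bounded_linear_compose[OF bounded_linear_adj bounded_linear_snd]
        bounded_linear_compose[OF blinfun.bounded_linear_right bounded_linear_fst])
  then show ?thesis unfolding chart_deriv_def by (simp add: bounded_linear_Blinfun_apply)
qed

lemma has_derivative_chart:
  assumes "p \<in> U \<times> UNIV"
  shows "(chart has_derivative blinfun_apply (chart_deriv p)) (at p)"
proof -
  have p: "fst p \<in> U" using assms by (auto simp: mem_Times_iff)
  show ?thesis
    unfolding chart_def chart_deriv_apply[abs_def]
    by (intro has_derivative_Pair has_derivative_add has_derivative_fst[OF has_derivative_ident]
        bounded_linear.has_derivative[OF bounded_linear_adj has_derivative_snd[OF has_derivative_ident]]
        has_derivative_compose[OF has_derivative_fst[OF has_derivative_ident] D\<Phi>[OF p], unfolded o_def])
qed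

lemma continuous_on_chart_deriv: "continuous_on (U \<times> UNIV) chart_deriv"
  by (rule continuous_on_blinfun_componentwise)
    (simp add: chart_deriv_apply continuous_intros continuous_on_fst_comp continuous_on_D\<Phi>)

lemma inj_chart_deriv_xb: "inj (blinfun_apply (chart_deriv (xb, 0)))"
proof -
  have "q = 0" if q: "chart_deriv (xb, 0) q = 0" for q
  proof -
    obtain h \<nu> where q_eq: "q = (h, \<nu>)" by fastforce
    have sum: "adj xb \<nu> = - h" and h: "D\<Phi> xb h = 0"
      using q by (auto simp: chart_deriv_apply q_eq zero_prod_def add_eq_0_iff2)
    have "adj xb \<nu> \<bullet> adj xb \<nu> = 0"
      using inner_adj[of xb \<nu> "adj xb \<nu>"] h by (simp add: sum blinfun.minus_right)
    then have "adj xb \<nu> = 0" by simp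
    then show ?thesis using adj_eq_0_if_surj[OF D\<Phi>_surj] sum by (simp add: q_eq zero_prod_def)
  qed
  then show ?thesis by (simp add: linear_injective_0[OF linear_blinfun_apply])
qed

lemma tangent_curve:
  obtains \<delta> where "\<delta> > 0"
    "\<And>x h. x \<in> M \<inter> U \<Longrightarrow> dist x xb < \<delta> \<Longrightarrow> D\<Phi> x h = 0 \<Longrightarrow>
       \<exists>\<gamma>. \<gamma> 0 = x \<and> (\<gamma> has_derivative (\<lambda>t. t *\<^sub>R h)) (at 0) \<and> eventually (\<lambda>t. \<gamma> t \<in> M \<inter> U) (at 0)"
proof -
  have open_dom: "open (U \<times> UNIV)" and xb_dom: "(xb, 0::'b) \<in> U \<times> UNIV"
    using U(1,2) by (auto simp: open_Times)
  obtain UE VE g where UE: "open UE" "UE \<subseteq> U \<times> UNIV" "(xb, 0) \<in> UE"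
    and VE: "open VE" "chart (xb, 0) \<in> VE" and hom: "homeomorphism UE VE chart g"
    and inj: "\<And>y. y \<in> VE \<Longrightarrow> inj (blinfun_apply (chart_deriv (g y)))"
    and dg: "\<And>y. y \<in> VE \<Longrightarrow> (g has_derivative blinfun_inv (chart_deriv (g y))) (at y)"
    by (rule inverse_function_theorem_blinfun_inv[OF open_dom has_derivative_chart
          continuous_on_chart_deriv xb_dom inj_chart_deriv_xb]) (simp, blast)
  obtain \<delta> where \<delta>: "\<delta> > 0" "ball (xb, 0) \<delta> \<subseteq> UE" using UE(1,3) open_contains_ball by blast
  have "\<exists>\<gamma>. \<gamma> 0 = x \<and> (\<gamma> has_derivative (\<lambda>t. t *\<^sub>R h)) (at 0) \<and> eventually (\<lambda>t. \<gamma> t \<in> M \<inter> U) (at 0)"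
    if x: "x \<in> M \<inter> U" "dist x xb < \<delta>" and h: "D\<Phi> x h = 0" for x h
  proof -
    define line where "line t = (x + t *\<^sub>R h, 0::'b)" for t :: real
    have line_0: "line 0 = (x, 0)" by (simp add: line_def)
    have d_line: "(line has_derivative (\<lambda>t. t *\<^sub>R (h, 0))) (at 0)"
      unfolding line_def by (auto intro!: derivative_eq_intros simp: zero_prod_def)
    have "(x, 0) \<in> UE" using \<delta> x(2) by (auto simp: dist_Pair_Pair dist_commute)
    moreover have "chart (x, 0) = (x, 0)" using x(1) M_eq by (auto simp: chart_def adj_zero)
    ultimately have x_VE: "(x, 0) \<in> VE" and g_x: "g (x, 0) = (x, 0)"
      using hom unfolding homeomorphism_def by (metis image_eqI)+
    have "chart_deriv (x, 0) (t *\<^sub>R h, 0) = (t *\<^sub>R h, 0)" for t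
      using h by (simp add: chart_deriv_apply adj_zero blinfun.scaleR_right)
    then have inv_h: "blinfun_inv (chart_deriv (x, 0)) (t *\<^sub>R h, 0) = (t *\<^sub>R h, 0)" for t
      using blinfun_inv_left[OF inj[OF x_VE, unfolded g_x]] by metis
    have "((\<lambda>t. g (line t)) has_derivative (\<lambda>t. blinfun_inv (chart_deriv (x, 0)) (t *\<^sub>R (h, 0)))) (at 0)"
      using has_derivative_compose[OF d_line dg[OF x_VE, folded line_0]] by (simp add: g_x line_0)
    from has_derivative_fst[OF this]
    have "((\<lambda>t. fst (g (line t))) has_derivative (\<lambda>t. t *\<^sub>R h)) (at 0)"
      by (simp add: inv_h)
    moreover have "eventually (\<lambda>t. line t \<in> VE) (at 0)"
      using has_derivative_continuous[OF d_line] x_VE VE(1) line_0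
      by (auto simp: isCont_def dest: topological_tendstoD)
    then have "eventually (\<lambda>t. fst (g (line t)) \<in> M \<inter> U) (at 0)"
    proof eventually_elim
      case (elim t)
      then have "g (line t) \<in> U \<times> UNIV" "chart (g (line t)) = line t"
        using hom UE(2) unfolding homeomorphism_def by auto
      then show ?case using M_eq by (auto simp: chart_def line_def mem_Times_iff prod_eq_iff)
    qed
    ultimately show ?thesis using g_x line_0 by (intro exI[of _ "\<lambda>t. fst (g (line t))"]) simp
  qed
  with \<delta>(1) that show ?thesis by blast
qed

lemma prox_subgrad_imp_normal:
  obtains \<delta> where "\<delta> > 0"
    "\<And>x v. x \<in> M \<inter> U \<Longrightarrow> dist x xb < \<delta> \<Longrightarrow> prox_subgrad x v \<Longrightarrow> v - grad_fhat x \<in> range (adj x)"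
proof -
  obtain \<delta>0 where \<delta>0: "\<delta>0 > 0" and curve: "\<And>x h. x \<in> M \<inter> U \<Longrightarrow> dist x xb < \<delta>0 \<Longrightarrow> D\<Phi> x h = 0 \<Longrightarrow>
       \<exists>\<gamma>. \<gamma> 0 = x \<and> (\<gamma> has_derivative (\<lambda>t. t *\<^sub>R h)) (at 0) \<and> eventually (\<lambda>t. \<gamma> t \<in> M \<inter> U) (at 0)"
    using tangent_curve by blast
  define \<delta> where "\<delta> = min \<delta>0 \<epsilon>"
  have "v - grad_fhat x \<in> range (adj x)"
    if x: "x \<in> M \<inter> U" "dist x xb < \<delta>" and v: "prox_subgrad x v" for x v
  proof -
    have "(v - grad_fhat x) \<bullet> h = 0" if h: "D\<Phi> x h = 0" for h
    proof -
      obtain \<gamma> where \<gamma>: "\<gamma> 0 = x" "(\<gamma> has_derivative (\<lambda>t. t *\<^sub>R h)) (at 0)"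
        "eventually (\<lambda>t. \<gamma> t \<in> M \<inter> U) (at 0)"
        using curve[OF x(1) _ h] x(2) by (auto simp: \<delta>_def)
      define \<phi> where "\<phi> t = fhat (\<gamma> t) - v \<bullet> (\<gamma> t - x) + \<rho> / 2 * ((\<gamma> t - x) \<bullet> (\<gamma> t - x))" for t
      have "((\<lambda>t. fhat (\<gamma> t)) has_derivative (\<lambda>t. Df x (t *\<^sub>R h))) (at 0)"
        using has_derivative_compose[OF \<gamma>(2) Df] x(1) \<gamma>(1) by simp
      then have d\<phi>: "(\<phi> has_derivative (\<lambda>t. t * (Df x h - v \<bullet> h))) (at 0)"
        unfolding \<phi>_def
        by (auto intro!: derivative_eq_intros \<gamma>(2) simp: \<gamma>(1) blinfun.scaleR_right algebra_simps)
      have "(\<gamma> \<longlongrightarrow> \<gamma> 0) (at 0)"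
        using has_derivative_continuous[OF \<gamma>(2)] by (simp add: isCont_def)
      moreover have "\<gamma> 0 \<in> ball xb \<epsilon>" using \<gamma>(1) x(2) by (simp add: \<delta>_def dist_commute)
      ultimately have "eventually (\<lambda>t. \<gamma> t \<in> ball xb \<epsilon>) (at 0)"
        by (rule topological_tendstoD[OF _ open_ball])
      with \<gamma>(3) have "eventually (\<lambda>t. \<phi> 0 \<le> \<phi> t) (at 0)"
      proof eventually_elim
        case (elim t)
        then have "f (\<gamma> t) \<ge> f x + ereal (v \<bullet> (\<gamma> t - x) - \<rho> / 2 * (norm (\<gamma> t - x))\<^sup>2)"
          using v unfolding prox_subgrad_def by (simp add: dist_commute less_imp_le)
        then show ?case
          using f_eq_fhat[OF elim(1)] f_eq_fhat[OF x(1)] \<gamma>(1)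
          by (simp add: \<phi>_def power2_norm_eq_inner algebra_simps)
      qed
      from fun_cong[OF has_derivative_local_min[OF d\<phi> this], of 1]
      show ?thesis by (simp add: inner_diff_left grad_fhat_inner)
    qed
    then show ?thesis
      unfolding adj_eq_adjoint by (rule orthogonal_kernel_imp_in_range_adjoint[OF linear_blinfun_apply])
  qed
  moreover have "\<delta> > 0" using \<delta>0 \<epsilon> by (simp add: \<delta>_def)
  ultimately show ?thesis using that by blast
qed

lemma prox_subgrad_convex_closed:
  assumes x: "x \<in> M \<inter> U"
  shows "convex {g. prox_subgrad x g}" "closed {g. prox_subgrad x g}"
proof -
  let ?H = "\<lambda>u. {g. f u \<ge> ereal ((fhat x - \<rho> / 2 * (norm (u - x))\<^sup>2) + g \<bullet> (u - x))}"
  have eq: "{g. prox_subgrad x g} = (\<Inter>u\<in>{u. dist u xb \<le> \<epsilon>}. ?H u)"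
    unfolding prox_subgrad_def using f_eq_fhat[OF x] by (auto simp: algebra_simps)
  show "convex {g. prox_subgrad x g}" unfolding eq
    by (rule convex_INT) (use ereal_halfspace_convex_closed in blast)
  show "closed {g. prox_subgrad x g}" unfolding eq
    by (rule closed_INT) (use ereal_halfspace_convex_closed in blast)
qed

lemma separating_normal_direction:
  assumes x: "x \<in> M \<inter> U"
    and normal: "\<And>g. prox_subgrad x g \<Longrightarrow> g - grad_fhat x \<in> range (adj x)"
    and v: "v - grad_fhat x \<in> range (adj x)" "\<not> prox_subgrad x v"
  obtains \<eta> where "norm \<eta> = 1" "\<And>g. prox_subgrad x g \<Longrightarrow> adj x \<eta> \<bullet> (g - v) > 0"
proof -
  obtain a b where ab: "a \<bullet> v < b" "\<And>g. prox_subgrad x g \<Longrightarrow> a \<bullet> g > b"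
    using separating_hyperplane_closed_point[OF prox_subgrad_convex_closed[OF x]] v(2) by blast
  have N: "subspace (range (adj x))"
    using subspace_UNIV linear_subspace_image bounded_linear.linear[OF bounded_linear_adj] by blast
  obtain \<eta> where \<eta>: "orth_proj (range (adj x)) a = adj x \<eta>" using orth_proj_in[OF N] by blast
  have pos: "adj x \<eta> \<bullet> (g - v) > 0" if g: "prox_subgrad x g" for g
  proof -
    have "(g - grad_fhat x) - (v - grad_fhat x) \<in> range (adj x)"
      using normal[OF g] v(1) N subspace_diff by blast
    then have "(a - adj x \<eta>) \<bullet> (g - v) = 0" using orth_proj_orthogonal[OF N, of "g - v" a] \<eta> by simp
    moreover have "a \<bullet> (g - v) > 0" using ab(1) ab(2)[OF g] by (simp add: inner_diff_right)
    ultimately show ?thesis by (simp add: inner_diff_left)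
  qed
  show ?thesis
  proof (cases "\<eta> = 0")
    case True
    then have "\<not> prox_subgrad x g" for g using pos[of g] by (auto simp: adj_zero)
    moreover obtain e :: 'b where "norm e = 1" using vector_choose_size[of 1] by auto
    ultimately show ?thesis using that by blast
  next
    case False
    then show ?thesis
      using pos by (intro that[of "(1 / norm \<eta>) *\<^sub>R \<eta>"]) (auto simp: adj_scaleR)
  qed
qed

lemma prox_subgrad_along_inner_limit:
  assumes X: "X \<longlonglongrightarrow> xb" "\<And>k. X k \<in> M \<inter> U"
    and a: "a \<in> lim_subdiff f xb" "dist a vb < \<epsilon>"
  obtains ws where "ws \<longlonglongrightarrow> a" "eventually (\<lambda>k. prox_subgrad (X k) (ws k)) sequentially"
proof -
  have "a \<in> inner_lim_within M (lim_subdiff f) xb" using a(1) inner_lim by simp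
  then obtain ws k0 where ws: "\<And>k. k \<ge> k0 \<Longrightarrow> ws k \<in> lim_subdiff f (X k)" "ws \<longlonglongrightarrow> a"
    unfolding inner_lim_within_def using X by blast
  have "(\<lambda>k. dist (X k, ws k) (xb, vb)) \<longlonglongrightarrow> dist (xb, a) (xb, vb)"
    by (intro tendsto_intros X(1) ws(2))
  then have "eventually (\<lambda>k. dist (X k, ws k) (xb, vb) < \<epsilon>) sequentially"
    using a(2) by (auto simp: dist_Pair_Pair dest: order_tendstoD(2))
  moreover have "(\<lambda>k. fhat (X k)) \<longlonglongrightarrow> fhat xb"
    using continuous_on_tendsto_compose[OF continuous_on_fhat X(1) U(2)] X(2) by simp
  then have "eventually (\<lambda>k. fhat (X k) < fhat xb + \<epsilon>) sequentially"
    by (rule order_tendstoD(2)) (use \<epsilon> in simp)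
  ultimately have "eventually (\<lambda>k. prox_subgrad (X k) (ws k)) sequentially"
    using eventually_ge_at_top[of k0]
  proof eventually_elim
    case (elim k)
    have "f (X k) \<le> f xb + ereal \<epsilon>"
      using elim(2) f_eq_fhat[OF X(2)] f_eq_fhat[of xb] U by simp
    then show ?case
      unfolding prox_subgrad_def using prox_reg[OF _ ws(1)[OF elim(3)]] elim(1)
      by (simp add: less_imp_le)
  qed
  with ws(2) show ?thesis by (rule that)
qed

lemma no_separating_normals:
  assumes X: "X \<longlonglongrightarrow> xb" "\<And>k. X k \<in> M \<inter> U" and V: "V \<longlonglongrightarrow> vb" and \<eta>: "\<And>k. norm (\<eta> k) = 1"
  shows "\<exists>k g. prox_subgrad (X k) g \<and> adj (X k) (\<eta> k) \<bullet> (g - V k) \<le> 0"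
proof (rule ccontr)
  assume "\<nexists>k g. prox_subgrad (X k) g \<and> adj (X k) (\<eta> k) \<bullet> (g - V k) \<le> 0"
  then have sep: "\<And>k g. prox_subgrad (X k) g \<Longrightarrow> adj (X k) (\<eta> k) \<bullet> (g - V k) > 0"
    by (meson not_le)
  have "seq_compact (sphere (0::'b) 1)" by (simp add: compact_imp_seq_compact)
  then obtain l \<sigma> where l: "l \<in> sphere 0 1" and \<sigma>: "strict_mono \<sigma>" and \<eta>_lim: "(\<eta> \<circ> \<sigma>) \<longlonglongrightarrow> l"
    using seq_compactE[of "sphere 0 1" \<eta>] \<eta> by auto
  have X\<sigma>: "(X \<circ> \<sigma>) \<longlonglongrightarrow> xb" "\<And>k. (X \<circ> \<sigma>) k \<in> M \<inter> U"
    using LIMSEQ_subseq_LIMSEQ[OF X(1) \<sigma>] X(2) by auto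
  define y where "y = adj xb l"
  have adj_lim: "(\<lambda>k. adj (X (\<sigma> k)) (\<eta> (\<sigma> k))) \<longlonglongrightarrow> y"
    using continuous_on_tendsto_compose[OF continuous_on_adj tendsto_Pair[OF X\<sigma>(1) \<eta>_lim]] U(2) X(2)
    by (simp add: y_def o_def)
  have "y \<noteq> 0" using adj_eq_0_if_surj[OF D\<Phi>_surj, of l] l by (auto simp: y_def)
  moreover have "y \<in> par (lim_subdiff f xb)" using normal_eq_par by (auto simp: y_def adj_eq_adjoint)
  ultimately obtain a where a: "a \<in> lim_subdiff f xb" "dist a vb < \<epsilon>" "y \<bullet> (a - vb) < 0"
    using rel_interior_step_against[OF vb_ri _ _ \<epsilon>] by blast
  obtain ws where ws: "ws \<longlonglongrightarrow> a" "eventually (\<lambda>k. prox_subgrad (X (\<sigma> k)) (ws k)) sequentially"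
    using prox_subgrad_along_inner_limit[OF X\<sigma> a(1,2)] by auto
  have "(\<lambda>k. adj (X (\<sigma> k)) (\<eta> (\<sigma> k)) \<bullet> (ws k - V (\<sigma> k))) \<longlonglongrightarrow> y \<bullet> (a - vb)"
    using LIMSEQ_subseq_LIMSEQ[OF V \<sigma>] by (intro tendsto_intros adj_lim ws(1)) (simp add: o_def)
  moreover have "eventually (\<lambda>k. 0 \<le> adj (X (\<sigma> k)) (\<eta> (\<sigma> k)) \<bullet> (ws k - V (\<sigma> k))) sequentially"
    using ws(2) by eventually_elim (simp add: sep less_imp_le)
  ultimately have "0 \<le> y \<bullet> (a - vb)" by (rule tendsto_lowerbound) simp
  with a(3) show False by simp
qed

lemma prox_subgrad_near_normal:
  "eventually (\<lambda>(x, v). x \<in> M \<inter> U \<longrightarrow> v - grad_fhat x \<in> range (adj x) \<longrightarrow> prox_subgrad x v)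
     (nhds (xb, vb))"
proof -
  obtain \<delta>1 where \<delta>1: "\<delta>1 > 0" and normal: "\<And>x v. x \<in> M \<inter> U \<Longrightarrow> dist x xb < \<delta>1 \<Longrightarrow>
      prox_subgrad x v \<Longrightarrow> v - grad_fhat x \<in> range (adj x)"
    using prox_subgrad_imp_normal by blast
  define P where "P = (\<lambda>(x, v). x \<in> M \<inter> U \<longrightarrow> dist x xb < \<delta>1 \<longrightarrow>
    v - grad_fhat x \<in> range (adj x) \<longrightarrow> prox_subgrad x v)"
  have "eventually P (nhds (xb, vb))"
  proof (rule ccontr)
    assume "\<not> eventually P (nhds (xb, vb))"
    then obtain XV where XV: "XV \<longlonglongrightarrow> (xb, vb)" "\<And>k. \<not> P (XV k)"
      using not_eventually_nhds_imp_seq by blast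
    define X where "X = (\<lambda>k. fst (XV k))"
    define V where "V = (\<lambda>k. snd (XV k))"
    have X: "X \<longlonglongrightarrow> xb" "\<And>k. X k \<in> M \<inter> U" and V: "V \<longlonglongrightarrow> vb"
      and bad: "\<And>k. dist (X k) xb < \<delta>1" "\<And>k. V k - grad_fhat (X k) \<in> range (adj (X k))"
        "\<And>k. \<not> prox_subgrad (X k) (V k)"
      using tendsto_fst[OF XV(1)] tendsto_snd[OF XV(1)] XV(2)
      by (auto simp: X_def V_def P_def case_prod_beta)
    have "\<exists>\<eta>. norm \<eta> = 1 \<and> (\<forall>g. prox_subgrad (X k) g \<longrightarrow> adj (X k) \<eta> \<bullet> (g - V k) > 0)" for k
      by (rule separating_normal_direction[OF X(2) normal[OF X(2) bad(1)] bad(2,3), of k]) auto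
    then obtain \<eta> where \<eta>: "\<And>k. norm (\<eta> k) = 1"
      "\<And>k g. prox_subgrad (X k) g \<Longrightarrow> adj (X k) (\<eta> k) \<bullet> (g - V k) > 0"
      by metis
    then show False using no_separating_normals[OF X V, of \<eta>] by force
  qed
  moreover have "((\<lambda>p. fst p) \<longlongrightarrow> xb) (nhds (xb, vb))"
    using tendsto_fst[OF filterlim_ident, of "(xb, vb)"] by simp
  then have "((\<lambda>p. dist (fst p) xb) \<longlongrightarrow> dist xb xb) (nhds (xb, vb))"
    by (intro tendsto_intros)
  then have "eventually (\<lambda>p. dist (fst p) xb < \<delta>1) (nhds (xb, vb))"
    by (rule order_tendstoD(2)) (simp add: \<delta>1)
  ultimately show ?thesis by eventually_elim (auto simp: P_def)
qed

lemma prox_objective_local_strict: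
  assumes x: "x \<in> M \<inter> U" and v: "prox_subgrad x v" and r: "r > 0" "r * \<rho> < 1"
    and u: "u \<noteq> x" "dist u xb \<le> \<epsilon>"
  shows "f x + ereal ((norm (x - (x + r *\<^sub>R v)))\<^sup>2 / (2 * r))
    < f u + ereal ((norm (u - (x + r *\<^sub>R v)))\<^sup>2 / (2 * r))"
proof -
  have lower: "f u \<ge> ereal (fhat x + (v \<bullet> (u - x) - \<rho> / 2 * (norm (u - x))\<^sup>2))"
    using v u(2) f_eq_fhat[OF x] unfolding prox_subgrad_def by simp
  have "u - (x + r *\<^sub>R v) = (u - x) - r *\<^sub>R v" by simp
  then have "(norm (u - (x + r *\<^sub>R v)))\<^sup>2 = (norm (u - x))\<^sup>2 - 2 * r * (v \<bullet> (u - x)) + r\<^sup>2 * (v \<bullet> v)"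
    unfolding power2_norm_eq_inner
    by (simp add: inner_diff_left inner_diff_right inner_commute power2_eq_square algebra_simps)
  moreover have "(norm (x - (x + r *\<^sub>R v)))\<^sup>2 = r\<^sup>2 * (v \<bullet> v)"
    by (simp add: power_mult_distrib flip: power2_norm_eq_inner)
  moreover have "(1 - r * \<rho>) * (norm (u - x))\<^sup>2 > 0" using u(1) r(2) by simp
  ultimately have "fhat x + (norm (x - (x + r *\<^sub>R v)))\<^sup>2 / (2 * r)
      < fhat x + (v \<bullet> (u - x) - \<rho> / 2 * (norm (u - x))\<^sup>2) + (norm (u - (x + r *\<^sub>R v)))\<^sup>2 / (2 * r)"
    using r(1) by (simp add: field_simps power2_eq_square)
  then show ?thesis using lower f_eq_fhat[OF x] by (cases "f u") auto
qed

lemma prox_eq_singleton_if_small: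
  assumes minor: "\<And>u. f u \<ge> ereal (c - A * (norm u)\<^sup>2)" and A: "A \<ge> 0"
    and r: "r > 0" "r * \<rho> < 1" "r * (32 * A + 1) \<le> 1" "r * (norm vb + 1) \<le> \<epsilon> / 4" "r \<le> 1"
    and far: "fhat xb + 1 + (norm vb + 1)\<^sup>2 / 2 < c - 2 * A * (norm xb)\<^sup>2 + \<epsilon>\<^sup>2 / (16 * r)"
    and x: "x \<in> M \<inter> U" "dist x xb < \<epsilon> / 4" "fhat x < fhat xb + 1"
    and v: "dist v vb < 1" "prox_subgrad x v"
  shows "prox r f (x + r *\<^sub>R v) = {x}"
proof -
  define z where "z = x + r *\<^sub>R v"
  have nv: "norm v \<le> norm vb + 1" using v(1) norm_triangle_sub[of v vb] by (simp add: dist_norm)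
  have "(norm (x - z))\<^sup>2 / (2 * r) = r * (norm v)\<^sup>2 / 2"
    using r(1) by (simp add: z_def power_mult_distrib power2_eq_square)
  also have "\<dots> \<le> 1 * (norm vb + 1)\<^sup>2 / 2"
    using r nv by (intro divide_right_mono mult_mono power_mono) auto
  finally have fx: "f x + ereal ((norm (x - z))\<^sup>2 / (2 * r)) \<le> ereal (fhat xb + 1 + (norm vb + 1)\<^sup>2 / 2)"
    using f_eq_fhat[OF x(1)] x(3) by simp
  have "norm (z - xb) \<le> norm (x - xb) + norm (r *\<^sub>R v)"
    using norm_triangle_ineq[of "x - xb" "r *\<^sub>R v"] by (simp add: z_def algebra_simps)
  moreover have "norm (r *\<^sub>R v) \<le> r * (norm vb + 1)" using r(1) nv by (simp add: mult_left_mono)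
  ultimately have z: "norm (z - xb) \<le> \<epsilon> / 2" using x(2) r(4) by (simp add: dist_norm)
  have "f x + ereal ((norm (x - z))\<^sup>2 / (2 * r)) < f u + ereal ((norm (u - z))\<^sup>2 / (2 * r))"
    if "u \<noteq> x" for u
  proof (cases "dist u xb \<le> \<epsilon>")
    case True
    then show ?thesis unfolding z_def by (rule prox_objective_local_strict[OF x(1) v(2) r(1,2) that])
  next
    case False
    note fx
    also have "ereal (fhat xb + 1 + (norm vb + 1)\<^sup>2 / 2)
        < ereal (c - 2 * A * (norm xb)\<^sup>2 + \<epsilon>\<^sup>2 / (16 * r))"
      using far by simp
    also have "\<dots> \<le> f u + ereal ((norm (u - z))\<^sup>2 / (2 * r))"
      using prox_objective_far_lower_bound[where f = f and u = u, OF minor A r(1,3) z] False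
      by (simp add: dist_norm)
    finally show ?thesis .
  qed
  then show ?thesis unfolding z_def by (rule prox_eq_singletonI)
qed

lemma eventually_prox_eq_singleton:
  "eventually (\<lambda>r. \<forall>x v. x \<in> M \<inter> U \<longrightarrow> dist x xb < \<epsilon> / 4 \<longrightarrow> dist v vb < 1 \<longrightarrow>
      fhat x < fhat xb + 1 \<longrightarrow> prox_subgrad x v \<longrightarrow> prox r f (x + r *\<^sub>R v) = {x}) (at_right 0)"
proof -
  obtain A c where A: "A \<ge> 0" and minor: "\<And>u. f u \<ge> ereal (c - A * (norm u)\<^sup>2)"
    using prox_bounded_imp_quadratic_minorant[OF prox_bdd] by blast
  define C where "C = 16 * (fhat xb + 1 + (norm vb + 1)\<^sup>2 / 2 - c + 2 * A * (norm xb)\<^sup>2)"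
  have "eventually (\<lambda>r. 0 < r \<and> r * \<rho> < 1 \<and> r * (32 * A + 1) < 1 \<and> r * (4 * (norm vb + 1)) < \<epsilon> \<and>
      r * 1 < 1 \<and> r * C < \<epsilon>\<^sup>2) (at_right 0)"
    using \<epsilon> by (intro eventually_conj eventually_at_right_less eventually_at_right_0_mult_less) auto
  then show ?thesis
  proof eventually_elim
    case (elim r)
    then show ?case
      by (intro allI impI prox_eq_singleton_if_small[OF minor A]) (auto simp: C_def field_simps)
  qed
qed

section \<open>Smoothness of the proximal mapping\<close>

(* The proximal point x of z and its Lagrange multiplier mu are the solutions of
  kkt_map r (x, mu) = (z, 0). *)
definition "kkt_map r (p::'a \<times> 'b) = (fst p + r *\<^sub>R grad_L (fst p) (snd p), \<Phi> (fst p))"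
definition "kkt_deriv r (p::'a \<times> 'b) = Blinfun (\<lambda>q.
  (fst q + r *\<^sub>R (hess_L (fst p) (snd p) (fst q) + adj (fst p) (snd q)), D\<Phi> (fst p) (fst q)))"

lemma kkt_deriv_apply:
  "kkt_deriv r p q =
    (fst q + r *\<^sub>R (hess_L (fst p) (snd p) (fst q) + adj (fst p) (snd q)), D\<Phi> (fst p) (fst q))"
proof -
  have "bounded_linear (\<lambda>q::'a \<times> 'b.
      (fst q + r *\<^sub>R (hess_L (fst p) (snd p) (fst q) + adj (fst p) (snd q)), D\<Phi> (fst p) (fst q)))"
    by (intro bounded_linear_Pair bounded_linear_add bounded_linear_fst bounded_linear_const_scaleR
        bounded_linear_compose[OF bounded_linear_hess_L bounded_linear_fst]
        bounded_linear_compose[OF bounded_linear_adj bounded_linear_snd]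
        bounded_linear_compose[OF blinfun.bounded_linear_right bounded_linear_fst])
  then show ?thesis unfolding kkt_deriv_def by (simp add: bounded_linear_Blinfun_apply)
qed

lemma has_derivative_kkt_map:
  assumes "p \<in> U \<times> UNIV"
  shows "(kkt_map r has_derivative blinfun_apply (kkt_deriv r p)) (at p)"
proof -
  have p: "fst p \<in> U" using assms by (auto simp: mem_Times_iff)
  show ?thesis
    unfolding kkt_map_def kkt_deriv_apply[abs_def]
    by (intro has_derivative_Pair has_derivative_add has_derivative_fst[OF has_derivative_ident]
        has_derivative_scaleR_right has_derivative_grad_L p
        has_derivative_compose[OF has_derivative_fst[OF has_derivative_ident] D\<Phi>[OF p], unfolded o_def])
qed

lemma continuous_on_kkt_deriv: "continuous_on (U \<times> UNIV) (kkt_deriv r)"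
  by (rule continuous_on_blinfun_componentwise)
    (simp add: kkt_deriv_apply continuous_intros continuous_on_fst_comp continuous_on_D\<Phi>
      continuous_on_hess_L continuous_on_adj_fixed)

lemma inj_kkt_deriv_if_small:
  assumes r: "r > 0" "r * norm (Blinfun (hess_L x \<mu>)) < 1" and surj: "surj (blinfun_apply (D\<Phi> x))"
  shows "inj (blinfun_apply (kkt_deriv r (x, \<mu>)))"
proof -
  let ?C = "norm (Blinfun (hess_L x \<mu>))"
  have "q = 0" if q: "kkt_deriv r (x, \<mu>) q = 0" for q
  proof -
    obtain h \<nu> where q_eq: "q = (h, \<nu>)" by fastforce
    have eq: "h + r *\<^sub>R (hess_L x \<mu> h + adj x \<nu>) = 0" and h: "D\<Phi> x h = 0"
      using q by (auto simp: kkt_deriv_apply q_eq zero_prod_def)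
    have "h \<bullet> h = - r * (hess_L x \<mu> h \<bullet> h)"
      using arg_cong[OF eq, of "\<lambda>w. w \<bullet> h"] inner_adj[of x \<nu> h] h
      by (simp add: inner_add_left algebra_simps)
    also have "\<dots> \<le> r * (?C * norm h * norm h)"
    proof -
      have "norm (hess_L x \<mu> h) \<le> ?C * norm h"
        using norm_blinfun[of "Blinfun (hess_L x \<mu>)" h]
        by (simp add: bounded_linear_Blinfun_apply[OF bounded_linear_hess_L])
      then have "\<bar>hess_L x \<mu> h \<bullet> h\<bar> \<le> ?C * norm h * norm h"
        using Cauchy_Schwarz_ineq2[of "hess_L x \<mu> h" h] mult_right_mono[OF _ norm_ge_zero[of h]]
        by (meson order_trans)
      then have "r * (- (hess_L x \<mu> h \<bullet> h)) \<le> r * (?C * norm h * norm h)"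
        using r by (intro mult_left_mono) auto
      then show ?thesis by simp
    qed
    finally have "(1 - r * ?C) * (norm h)\<^sup>2 \<le> 0"
      by (simp add: power2_norm_eq_inner[symmetric] power2_eq_square algebra_simps)
    then have h0: "h = 0" using r by (simp add: mult_le_0_iff)
    then have "adj x \<nu> = 0" using eq r by (simp add: hess_L_def)
    then show ?thesis using adj_eq_0_if_surj[OF surj] h0 by (simp add: q_eq zero_prod_def)
  qed
  then show ?thesis by (simp add: linear_injective_0[OF linear_blinfun_apply])
qed

lemma eventually_inj_kkt_deriv: "eventually (\<lambda>r. inj (blinfun_apply (kkt_deriv r (xb, \<mu>)))) (at_right 0)"
proof -
  have "eventually (\<lambda>r. 0 < r \<and> r * norm (Blinfun (hess_L xb \<mu>)) < 1) (at_right 0)"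
    by (intro eventually_conj eventually_at_right_less eventually_at_right_0_mult_less) simp
  then show ?thesis by eventually_elim (auto intro: inj_kkt_deriv_if_small[OF _ _ D\<Phi>_surj])
qed

lemma subspace_kernel_D\<Phi>: "subspace {h. D\<Phi> x h = 0}"
  by (rule linear_subspace_kernel[OF linear_blinfun_apply])

(* P_T o (I + r Hess_xx L(x, mu)) restricted to T = T_M(x): the operator inverted in the formula. *)
definition "tangent_op r x \<mu> h = orth_proj {h. D\<Phi> x h = 0} (h + r *\<^sub>R hess_L x \<mu> h)"

lemma tangent_op_diff: "tangent_op r x \<mu> h1 - tangent_op r x \<mu> h2 = tangent_op r x \<mu> (h1 - h2)"
proof -
  have "hess_L x \<mu> (h1 - h2) = hess_L x \<mu> h1 - hess_L x \<mu> h2"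
    by (rule linear_diff[OF bounded_linear.linear[OF bounded_linear_hess_L]])
  then have "h1 - h2 + r *\<^sub>R hess_L x \<mu> (h1 - h2) =
      (h1 + r *\<^sub>R hess_L x \<mu> h1) - (h2 + r *\<^sub>R hess_L x \<mu> h2)"
    by (simp only: scaleR_diff_right) (simp add: algebra_simps)
  then show ?thesis by (simp only: tangent_op_def orth_proj_diff[OF subspace_kernel_D\<Phi>])
qed

lemma kkt_deriv_eq_tangent_op:
  assumes "kkt_deriv r (x, \<mu>) (h, \<nu>) = (w, 0)"
  shows "D\<Phi> x h = 0" and "tangent_op r x \<mu> h = orth_proj {h. D\<Phi> x h = 0} w"
proof -
  have w: "w = (h + r *\<^sub>R hess_L x \<mu> h) + r *\<^sub>R adj x \<nu>" and "D\<Phi> x h = 0"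
    using assms by (auto simp: kkt_deriv_apply scaleR_add_right)
  then show "D\<Phi> x h = 0" by simp
  show "tangent_op r x \<mu> h = orth_proj {h. D\<Phi> x h = 0} w"
    unfolding w tangent_op_def
    by (rule orth_proj_add_orthogonal[OF subspace_kernel_D\<Phi>, symmetric]) (simp add: inner_adj)
qed

lemma inj_on_tangent_op:
  assumes inj: "inj (blinfun_apply (kkt_deriv r (x, \<mu>)))" and r: "r \<noteq> 0"
  shows "inj_on (tangent_op r x \<mu>) {h. D\<Phi> x h = 0}"
proof (rule inj_onI)
  fix h1 h2 assume "h1 \<in> {h. D\<Phi> x h = 0}" "h2 \<in> {h. D\<Phi> x h = 0}"
    and "tangent_op r x \<mu> h1 = tangent_op r x \<mu> h2"
  then have h: "D\<Phi> x (h1 - h2) = 0" and proj: "tangent_op r x \<mu> (h1 - h2) = 0"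
    using tangent_op_diff[of r x \<mu> h1 h2] by (auto simp: blinfun.diff_right)
  define h where "h = h1 - h2"
  have "(h + r *\<^sub>R hess_L x \<mu> h) \<bullet> t = 0" if "D\<Phi> x t = 0" for t
    using orth_proj_orthogonal[OF subspace_kernel_D\<Phi>, of t x "h + r *\<^sub>R hess_L x \<mu> h"] that proj
    by (simp add: h_def tangent_op_def)
  then have "h + r *\<^sub>R hess_L x \<mu> h \<in> range (adj x)"
    unfolding adj_eq_adjoint by (rule orthogonal_kernel_imp_in_range_adjoint[OF linear_blinfun_apply])
  then obtain \<nu> where \<nu>: "h + r *\<^sub>R hess_L x \<mu> h = adj x \<nu>" by blast
  define \<nu>' where "\<nu>' = (- 1 / r) *\<^sub>R \<nu>"
  have "r *\<^sub>R adj x \<nu>' = - adj x \<nu>" unfolding \<nu>'_def adj_scaleR using r by simp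
  then have "kkt_deriv r (x, \<mu>) (h, \<nu>') = 0"
    using \<nu>[symmetric] h by (simp add: kkt_deriv_apply scaleR_add_right zero_prod_def h_def)
  then have "(h, \<nu>') = 0" by (metis blinfun.zero_right inj injD)
  then show "h1 = h2" by (simp add: zero_prod_def h_def)
qed

lemma
  assumes inj: "inj (blinfun_apply (kkt_deriv r (x, \<mu>)))"
  defines "q w \<equiv> fst (blinfun_inv (kkt_deriv r (x, \<mu>)) (w, 0))"
  shows kkt_deriv_inv_tangent: "q w \<in> {h. D\<Phi> x h = 0}"
    and tangent_op_kkt_deriv_inv: "tangent_op r x \<mu> (q w) = orth_proj {h. D\<Phi> x h = 0} w"
  using kkt_deriv_eq_tangent_op[of r x \<mu> "q w" "snd (blinfun_inv (kkt_deriv r (x, \<mu>)) (w, 0))" w]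
    blinfun_inv_right[OF inj, of "(w, 0)"]
  by (simp_all add: q_def)

lemma tangent_op_image:
  assumes inj: "inj (blinfun_apply (kkt_deriv r (x, \<mu>)))"
  shows "tangent_op r x \<mu> ` {h. D\<Phi> x h = 0} = {h. D\<Phi> x h = 0}"
proof
  show "tangent_op r x \<mu> ` {h. D\<Phi> x h = 0} \<subseteq> {h. D\<Phi> x h = 0}"
    unfolding tangent_op_def using orth_proj_in[OF subspace_kernel_D\<Phi>] by blast
  show "{h. D\<Phi> x h = 0} \<subseteq> tangent_op r x \<mu> ` {h. D\<Phi> x h = 0}"
    using kkt_deriv_inv_tangent[OF inj] tangent_op_kkt_deriv_inv[OF inj]
      orth_proj_id[OF subspace_kernel_D\<Phi>]
    by (metis (no_types, lifting) image_eqI mem_Collect_eq subsetI)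
qed

lemma grad_L_multiplier_unique:
  assumes "inj (blinfun_apply (kkt_deriv r (x, \<mu>)))" and "grad_L x \<mu>' = grad_L x \<mu>"
  shows "\<mu>' = \<mu>"
proof -
  have "D\<Phi> x (fst (blinfun_inv (kkt_deriv r (x, \<mu>)) (0, \<eta>))) = \<eta>" for \<eta>
    using blinfun_inv_right[OF assms(1), of "(0, \<eta>)"] by (simp add: kkt_deriv_apply prod_eq_iff)
  then have "surj (blinfun_apply (D\<Phi> x))" by (rule surjI)
  then show ?thesis
    using adj_eq_0_if_surj[of x "\<mu>' - \<mu>"] assms(2) by (simp add: grad_L_def adj_diff)
qed

lemma prox_derivative_formulaI:
  assumes r: "r > 0" and x: "x \<in> U" and inj: "inj (blinfun_apply (kkt_deriv r (x, \<mu>)))"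
    and grad: "grad_L x \<mu> = (1 / r) *\<^sub>R (z - x)" and px: "p z = x"
    and dp: "frechet_derivative p (at z) = (\<lambda>w. fst (blinfun_inv (kkt_deriv r (x, \<mu>)) (w, 0)))"
  shows "prox_derivative_formula r fhat \<Phi> p z"
proof -
  have inj_T: "inj_on (tangent_op r x \<mu>) {h. D\<Phi> x h = 0}" using inj_on_tangent_op[OF inj] r by simp
  have unique: "\<mu>' = \<mu>" if "grad_L x \<mu>' = (1 / r) *\<^sub>R (z - x)" for \<mu>'
    using grad_L_multiplier_unique[OF inj] that grad by simp
  have "\<exists>!\<mu>'. grad_L x \<mu>' = (1 / r) *\<^sub>R (z - x)" using grad unique by blast
  moreover have "(THE \<mu>'. grad_L x \<mu>' = (1 / r) *\<^sub>R (z - x)) = \<mu>"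
    using grad unique by (rule the_equality)
  moreover have "frechet_derivative p (at z) w =
      the_inv_into {h. D\<Phi> x h = 0} (tangent_op r x \<mu>) (orth_proj {h. D\<Phi> x h = 0} w)" for w
    using the_inv_into_f_f[OF inj_T kkt_deriv_inv_tangent[OF inj]] tangent_op_kkt_deriv_inv[OF inj] dp
    by simp
  ultimately show ?thesis
    using inj_T tangent_op_image[OF inj]
    unfolding prox_derivative_formula_def Let_def px tangent_sp_eq[OF x] grad_lagr_eq[OF x]
      hess_lagr_eq[OF x] tangent_op_def[abs_def]
    by simp
qed

lemma kkt_map_eq_slice:
  assumes "kkt_map r (x, \<mu>) = (z, 0)" "x \<in> U" "r \<noteq> 0"
  shows "x \<in> M \<inter> U" "grad_L x \<mu> = (1 / r) *\<^sub>R (z - x)"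
proof -
  have "z - x = r *\<^sub>R grad_L x \<mu>" "\<Phi> x = 0"
    using assms(1) by (auto simp: kkt_map_def prod_eq_iff diff_eq_eq add.commute)
  then show "x \<in> M \<inter> U" "grad_L x \<mu> = (1 / r) *\<^sub>R (z - x)" using M_eq assms(2,3) by auto
qed

lemma kkt_local_inverse:
  assumes r: "r > 0" and inj0: "inj (blinfun_apply (kkt_deriv r (xb, \<mu>b)))" and \<mu>b: "grad_L xb \<mu>b = vb"
    and S: "open S" "(xb, vb) \<in> S"
  obtains W p \<mu> where "open W" "xb + r *\<^sub>R vb \<in> W" "C1_on W p"
    "\<And>z. z \<in> W \<Longrightarrow> p z \<in> M \<inter> U" "\<And>z. z \<in> W \<Longrightarrow> grad_L (p z) (\<mu> z) = (1 / r) *\<^sub>R (z - p z)"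
    "\<And>z. z \<in> W \<Longrightarrow> (p z, (1 / r) *\<^sub>R (z - p z)) \<in> S"
    "\<And>z. z \<in> W \<Longrightarrow> inj (blinfun_apply (kkt_deriv r (p z, \<mu> z)))"
    "\<And>z. z \<in> W \<Longrightarrow> frechet_derivative p (at z) = (\<lambda>w. fst (blinfun_inv (kkt_deriv r (p z, \<mu> z)) (w, 0)))"
proof -
  have open_dom: "open (U \<times> UNIV)" and xb_dom: "(xb, \<mu>b) \<in> U \<times> UNIV"
    using U(1,2) by (auto simp: open_Times)
  obtain UF VF g where UF: "open UF" "UF \<subseteq> U \<times> UNIV" "(xb, \<mu>b) \<in> UF"
    and VF: "open VF" "kkt_map r (xb, \<mu>b) \<in> VF" and hom: "homeomorphism UF VF (kkt_map r) g"
    and inj: "\<And>y. y \<in> VF \<Longrightarrow> inj (blinfun_apply (kkt_deriv r (g y)))"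
    and dg: "\<And>y. y \<in> VF \<Longrightarrow> (g has_derivative blinfun_inv (kkt_deriv r (g y))) (at y)"
    by (rule inverse_function_theorem_blinfun_inv[OF open_dom has_derivative_kkt_map
          continuous_on_kkt_deriv xb_dom inj0]) (simp, blast)
  have g_inv: "\<And>y. y \<in> VF \<Longrightarrow> kkt_map r (g y) = y" "\<And>y. y \<in> VF \<Longrightarrow> g y \<in> U \<times> UNIV"
    and cont_g: "continuous_on VF g"
    using hom UF(2) unfolding homeomorphism_def by auto
  have "kkt_map r (xb, \<mu>b) = (xb + r *\<^sub>R vb, 0)" using U M_eq \<mu>b by (auto simp: kkt_map_def)
  then have zb_VF: "(xb + r *\<^sub>R vb, 0) \<in> VF" and g_zb: "g (xb + r *\<^sub>R vb, 0) = (xb, \<mu>b)"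
    using VF(2) hom UF(3) unfolding homeomorphism_def by metis+
  define p where "p z = fst (g (z, 0))" for z
  define \<mu> where "\<mu> z = snd (g (z, 0))" for z
  define W where "W = {z. (z, 0) \<in> VF} \<inter> (\<lambda>z. (p z, (1 / r) *\<^sub>R (z - p z))) -` S"
  have "continuous_on {z. (z, 0::'b) \<in> VF} (\<lambda>z. g (z, 0))"
    by (rule continuous_on_compose2[OF cont_g]) (auto intro!: continuous_intros)
  then have "continuous_on {z. (z, 0::'b) \<in> VF} p"
    unfolding p_def by (rule continuous_on_fst)
  moreover have "open {z. (z, 0::'b) \<in> VF}"
    using continuous_open_vimage[OF VF(1), of "\<lambda>z. (z, 0)"] by (simp add: vimage_def continuous_intros)
  ultimately have W_open: "open W"
    unfolding W_def using S(1) by (intro continuous_open_preimage) (auto intro!: continuous_intros)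
  have "(1 / r) *\<^sub>R (xb + r *\<^sub>R vb - xb) = vb" using r by simp
  then have zb_W: "xb + r *\<^sub>R vb \<in> W" using zb_VF S(2) by (simp add: W_def p_def g_zb)
  have g_z: "g (z, 0) = (p z, \<mu> z)" for z by (simp add: p_def \<mu>_def)
  have kkt_z: "p z \<in> M \<inter> U" "grad_L (p z) (\<mu> z) = (1 / r) *\<^sub>R (z - p z)" if "z \<in> W" for z
    using kkt_map_eq_slice[of r "p z" "\<mu> z" z] g_inv[of "(z, 0)"] that r
    by (auto simp: W_def g_z mem_Times_iff)
  have cont_deriv: "continuous_on VF (\<lambda>y. kkt_deriv r (g y))"
    using continuous_on_compose2[OF continuous_on_kkt_deriv cont_g] g_inv(2) by blast
  have C1: "C1_on W p"
    unfolding p_def[abs_def]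
    by (rule C1_on_inverse_slice(1)[OF W_open _ cont_deriv inj dg]) (simp add: W_def)
  have dp: "frechet_derivative p (at z) = (\<lambda>w. fst (blinfun_inv (kkt_deriv r (p z, \<mu> z)) (w, 0)))"
    if "z \<in> W" for z
    using C1_on_inverse_slice(2)[OF W_open _ cont_deriv inj dg that]
    unfolding p_def[abs_def] \<mu>_def by (simp add: W_def)
  have inj_z: "inj (blinfun_apply (kkt_deriv r (p z, \<mu> z)))" if "z \<in> W" for z
    using inj[of "(z, 0)"] that by (simp add: W_def g_z)
  have S_z: "(p z, (1 / r) *\<^sub>R (z - p z)) \<in> S" if "z \<in> W" for z
    using that by (simp add: W_def)
  show ?thesis by (rule that[OF W_open zb_W C1 kkt_z S_z inj_z dp])
qed

lemma prox_C1_near_if_kkt_regular: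
  assumes r: "r > 0" and inj0: "inj (blinfun_apply (kkt_deriv r (xb, \<mu>b)))" and \<mu>b: "grad_L xb \<mu>b = vb"
    and S: "open S" "(xb, vb) \<in> S"
    and prox_S: "\<And>x v. (x, v) \<in> S \<Longrightarrow> x \<in> M \<inter> U \<Longrightarrow> v - grad_fhat x \<in> range (adj x) \<Longrightarrow>
      prox r f (x + r *\<^sub>R v) = {x}"
  shows "prox_C1_near r f fhat \<Phi> (M \<inter> U) (xb + r *\<^sub>R vb)"
proof -
  obtain W p \<mu> where W: "open W" "xb + r *\<^sub>R vb \<in> W" "C1_on W p"
    and p: "\<And>z. z \<in> W \<Longrightarrow> p z \<in> M \<inter> U" "\<And>z. z \<in> W \<Longrightarrow> grad_L (p z) (\<mu> z) = (1 / r) *\<^sub>R (z - p z)"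
      "\<And>z. z \<in> W \<Longrightarrow> (p z, (1 / r) *\<^sub>R (z - p z)) \<in> S"
      "\<And>z. z \<in> W \<Longrightarrow> inj (blinfun_apply (kkt_deriv r (p z, \<mu> z)))"
      "\<And>z. z \<in> W \<Longrightarrow> frechet_derivative p (at z) = (\<lambda>w. fst (blinfun_inv (kkt_deriv r (p z, \<mu> z)) (w, 0)))"
    using kkt_local_inverse[OF r inj0 \<mu>b S] by blast
  have "prox r f z = {p z}" if "z \<in> W" for z
  proof -
    have "(1 / r) *\<^sub>R (z - p z) - grad_fhat (p z) = adj (p z) (\<mu> z)"
      using p(2)[OF that, symmetric] by (simp add: grad_L_def)
    then have "prox r f (p z + r *\<^sub>R ((1 / r) *\<^sub>R (z - p z))) = {p z}"
      using p(1,3)[OF that] by (intro prox_S) auto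
    then show ?thesis using r by simp
  qed
  moreover have "prox_derivative_formula r fhat \<Phi> p z" if "z \<in> W" for z
    using p[OF that] r by (intro prox_derivative_formulaI[where \<mu> = "\<mu> z"]) auto
  ultimately show ?thesis unfolding prox_C1_near_def using W p(1) by blast
qed

lemma eventually_prox_C1_near:
  "eventually (\<lambda>r. prox_C1_near r f fhat \<Phi> (M \<inter> U) (xb + r *\<^sub>R vb)) (at_right 0)"
proof -
  have xb: "xb \<in> M \<inter> U" using U by simp
  have "prox_subgrad xb vb"
    unfolding prox_subgrad_def using prox_reg[of xb vb] vb_subdiff \<epsilon> f_eq_fhat[OF xb] by simp
  moreover obtain \<delta>1 where "\<delta>1 > 0" and "\<And>x v. x \<in> M \<inter> U \<Longrightarrow> dist x xb < \<delta>1 \<Longrightarrow>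
      prox_subgrad x v \<Longrightarrow> v - grad_fhat x \<in> range (adj x)"
    using prox_subgrad_imp_normal by blast
  ultimately have "vb - grad_fhat xb \<in> range (adj xb)" using xb by simp
  then obtain \<mu>b where "adj xb \<mu>b = vb - grad_fhat xb" by (metis rangeE)
  then have \<mu>b: "grad_L xb \<mu>b = vb" by (simp add: grad_L_def)
  obtain S1 where S1: "open S1" "(xb, vb) \<in> S1"
    "\<And>x v. (x, v) \<in> S1 \<Longrightarrow> x \<in> M \<inter> U \<Longrightarrow> v - grad_fhat x \<in> range (adj x) \<Longrightarrow> prox_subgrad x v"
    using prox_subgrad_near_normal unfolding eventually_nhds by fastforce
  define P where "P = U \<inter> fhat -` {..< fhat xb + 1}"
  have "open P"
    unfolding P_def by (rule continuous_open_preimage[OF continuous_on_fhat U(1) open_lessThan])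
  define S where "S = S1 \<inter> ((ball xb (\<epsilon> / 4) \<inter> P) \<times> ball vb 1)"
  have S: "open S" "(xb, vb) \<in> S"
    using S1 \<epsilon> U \<open>open P\<close> by (auto simp: S_def P_def intro!: open_Int open_Times)
  have "eventually (\<lambda>r. 0 < r \<and> inj (blinfun_apply (kkt_deriv r (xb, \<mu>b))) \<and>
      (\<forall>x v. x \<in> M \<inter> U \<longrightarrow> dist x xb < \<epsilon> / 4 \<longrightarrow> dist v vb < 1 \<longrightarrow>
        fhat x < fhat xb + 1 \<longrightarrow> prox_subgrad x v \<longrightarrow> prox r f (x + r *\<^sub>R v) = {x})) (at_right 0)"
    by (intro eventually_conj eventually_at_right_less eventually_inj_kkt_deriv
        eventually_prox_eq_singleton)
  then show ?thesis
  proof eventually_elim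
    case (elim r)
    show ?case
      by (rule prox_C1_near_if_kkt_regular[OF _ _ \<mu>b S])
        (use elim S1(3) in \<open>auto simp: S_def P_def dist_commute\<close>)
  qed
qed

end

lemma obtain_partly_smooth_prox:
  fixes f :: "'a::euclidean_space \<Rightarrow> ereal" and \<Phi> :: "'a \<Rightarrow> 'b::euclidean_space"
  assumes O: "open Ou" "xb \<in> Ou" "xb \<in> M"
    and Phi_C2: "C2_on Ou \<Phi>"
    and M_loc: "M \<inter> Ou = {x \<in> Ou. \<Phi> x = 0}"
    and Phi_surj: "surj (frechet_derivative \<Phi> (at xb))"
    and ps: "partly_smooth f fhat \<Phi> M xb"
    and vb_ri: "vb \<in> rel_interior (lim_subdiff f xb)"
    and preg: "prox_regular f xb vb"
    and pbdd: "prox_bounded f"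
  obtains U Df D2f D\<Phi> D2\<Phi> \<epsilon> \<rho> where
    "partly_smooth_prox f fhat \<Phi> M U xb vb Df D2f D\<Phi> D2\<Phi> \<epsilon> \<rho>" "U \<subseteq> Ou"
proof -
  obtain U0 where U0: "xb \<in> U0" "C2_on U0 fhat" "\<And>x. x \<in> M \<inter> U0 \<Longrightarrow> f x = ereal (fhat x)"
    and normal: "normal_sp \<Phi> xb = par (lim_subdiff f xb)"
    and inner_lim: "inner_lim_within M (lim_subdiff f) xb = lim_subdiff f xb"
    using ps unfolding partly_smooth_def by blast
  obtain Df D2f where "open U0" and Df: "\<And>x. x \<in> U0 \<Longrightarrow> (fhat has_derivative blinfun_apply (Df x)) (at x)"
    and D2f: "\<And>x. x \<in> U0 \<Longrightarrow> (Df has_derivative blinfun_apply (D2f x)) (at x)"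
    and "continuous_on U0 D2f"
    using U0(2) unfolding C2_on_def by blast
  obtain D\<Phi> D2\<Phi> where D\<Phi>: "\<And>x. x \<in> Ou \<Longrightarrow> (\<Phi> has_derivative blinfun_apply (D\<Phi> x)) (at x)"
    and D2\<Phi>: "\<And>x. x \<in> Ou \<Longrightarrow> (D\<Phi> has_derivative blinfun_apply (D2\<Phi> x)) (at x)"
    and "continuous_on Ou D2\<Phi>"
    using Phi_C2 unfolding C2_on_def by blast
  obtain \<epsilon> \<rho> where "\<epsilon> > 0" "\<rho> \<ge> 0"
    and pr: "\<And>x' v'. dist (x', v') (xb, vb) \<le> \<epsilon> \<and> v' \<in> lim_subdiff f x' \<and> f x' \<le> f xb + ereal \<epsilon> \<Longrightarrow>
        (\<forall>u. dist u xb \<le> \<epsilon> \<longrightarrow> f u \<ge> f x' + ereal (v' \<bullet> (u - x') - \<rho> / 2 * (norm (u - x'))\<^sup>2))"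
    using preg unfolding prox_regular_def by blast
  have D\<Phi>_xb: "frechet_derivative \<Phi> (at xb) = blinfun_apply (D\<Phi> xb)"
    using D\<Phi>[OF O(2)] frechet_derivative_at by metis
  have "partly_smooth_prox f fhat \<Phi> M (U0 \<inter> Ou) xb vb Df D2f D\<Phi> D2\<Phi> \<epsilon> \<rho>"
  proof
    show "open (U0 \<inter> Ou)" "xb \<in> U0 \<inter> Ou" "xb \<in> M" using \<open>open U0\<close> O U0(1) by auto
    show "M \<inter> (U0 \<inter> Ou) = {x \<in> U0 \<inter> Ou. \<Phi> x = 0}" using M_loc by blast
    show "continuous_on (U0 \<inter> Ou) D2f" "continuous_on (U0 \<inter> Ou) D2\<Phi>"
      using \<open>continuous_on U0 D2f\<close> \<open>continuous_on Ou D2\<Phi>\<close> continuous_on_subset by blast+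
    show "surj (blinfun_apply (D\<Phi> xb))" using Phi_surj D\<Phi>_xb by simp
    show "range (adjoint (blinfun_apply (D\<Phi> xb))) = par (lim_subdiff f xb)"
      using normal D\<Phi>_xb by (simp add: normal_sp_def)
  qed (use U0(3) Df D2f D\<Phi> D2\<Phi> \<open>\<epsilon> > 0\<close> \<open>\<rho> \<ge> 0\<close> pr preg inner_lim vb_ri pbdd in
    \<open>auto simp: prox_regular_def\<close>)
  then show ?thesis using that by blast
qed

theorem corollary3p19:
  fixes f :: "'a::euclidean_space \<Rightarrow> ereal"
    and fhat :: "'a \<Rightarrow> real"
    and \<Phi> :: "'a \<Rightarrow> 'b::euclidean_space"
    and M Ou :: "'a set"
    and xb vb :: 'a
  assumes O: "open Ou" "xb \<in> Ou" "xb \<in> M"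
    and Phi_C2: "C2_on Ou \<Phi>"
    and M_loc: "M \<inter> Ou = {x \<in> Ou. \<Phi> x = 0}"
    and Phi_surj: "surj (frechet_derivative \<Phi> (at xb))"
    and ps: "partly_smooth f fhat \<Phi> M xb"
    and vb_ri: "vb \<in> rel_interior (lim_subdiff f xb)"
    and preg: "prox_regular f xb vb"
    and scont: "subdiff_continuous f xb vb"
    and pbdd: "prox_bounded f"
  shows "\<exists>r0>0. \<forall>r. 0 < r \<and> r < r0 \<longrightarrow>
    (\<exists>W p. open W \<and> xb + r *\<^sub>R vb \<in> W \<and>
       (\<forall>z\<in>W. prox r f z = {p z} \<and> p z \<in> M \<inter> Ou) \<and>
       C1_on W p \<and>
       (\<forall>z\<in>W. let x = p z; T = tangent_sp \<Phi> x in
          (\<exists>!\<mu>. grad (\<lambda>u. lagr fhat \<Phi> u \<mu>) x = (1 / r) *\<^sub>R (z - x)) \<and>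
          (let \<mu> = (THE \<mu>. grad (\<lambda>u. lagr fhat \<Phi> u \<mu>) x = (1 / r) *\<^sub>R (z - x));
               A = (\<lambda>h. orth_proj T (h + r *\<^sub>R hess (\<lambda>u. lagr fhat \<Phi> u \<mu>) x h))
           in inj_on A T \<and> A ` T = T \<and>
              (\<forall>w. frechet_derivative p (at z) w = the_inv_into T A (orth_proj T w)))))"
proof -
  obtain U Df D2f D\<Phi> D2\<Phi> \<epsilon> \<rho> where
    "partly_smooth_prox f fhat \<Phi> M U xb vb Df D2f D\<Phi> D2\<Phi> \<epsilon> \<rho>" and "U \<subseteq> Ou"
    using obtain_partly_smooth_prox[OF O Phi_C2 M_loc Phi_surj ps vb_ri preg pbdd] by blast
  then have "eventually (\<lambda>r. prox_C1_near r f fhat \<Phi> (M \<inter> Ou) (xb + r *\<^sub>R vb)) (at_right 0)"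
    by (auto elim!: eventually_mono[OF partly_smooth_prox.eventually_prox_C1_near] prox_C1_near_mono)
  then show ?thesis
    unfolding eventually_at_right_field prox_C1_near_def prox_derivative_formula_def by auto
qed

end
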